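(* Let $\mathbf{PolyCirc}$ and $\mathbf{Poly}_{\mathbb{Z}_2}$ be as described in the context, and let $[\![\cdot]\!]:\mathbf{PolyCirc}\to\mathbf{Poly}_{\mathbb{Z}_2}$ be the identity-on-objects strict symmetric monoidal interpretation functor determined by $[\![\mathsf{discard}]\!]=\langle\rangle$, $[\![\mathsf{copy}]\!]=\langle x_1,x_1\rangle$, $[\![\mathsf{zero}]\!]=\langle 0\rangle$, $[\![\mathsf{add}]\!]=\langle x_1+x_2\rangle$, $[\![\mathsf{one}]\!]=\langle 1\rangle$, $[\![\mathsf{and}]\!]=\langle x_1x_2\rangle$. Then $[\![\cdot]\!]$ is an isomorphism of symmetric monoidal categories.
   Context: A circuit is a morphism of the free symmetric strict monoidal category whose objects are natural numbers (tensor = addition) generated by $\mathsf{discard}:1\to 0$, $\mathsf{copy}:1\to 2$, $\mathsf{zero}:0\to1$, $\mathsf{add}:2\to1$, $\mathsf{one}:0\to 1$, $\mathsf{and}:2\to 1$. Composition is written diagrammatically, $f;g$ meaning "first $f$ then $g$", $\sigma$ denotes the symmetry $2\to 2$, and $\mathsf{copy}_n:n\to 2n$, $\mathsf{discard}_n:n\to 0$ denote the evident composites of copies/discards and symmetries. Let $E$ be the following set of equations between circuits: (1) $\mathsf{copy};\sigma=\mathsf{copy}$; $\mathsf{copy};(\mathsf{copy}\otimes \mathrm{id}_1)=\mathsf{copy};(\mathrm{id}_1\otimes\mathsf{copy})$; $\mathsf{copy};(\mathsf{discard}\otimes\mathrm{id}_1)=\mathrm{id}_1$; (2) for every circuit $f:a\to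 b$: $f;\mathsf{copy}_b=\mathsf{copy}_a;(f\otimes f)$ and $f;\mathsf{discard}_b=\mathsf{discard}_a$; (3) $\sigma;\mathsf{add}=\mathsf{add}$, $(\mathsf{add}\otimes\mathrm{id}_1);\mathsf{add}=(\mathrm{id}_1\otimes\mathsf{add});\mathsf{add}$, $(\mathsf{zero}\otimes\mathrm{id}_1);\mathsf{add}=\mathrm{id}_1$; (4) the same three equations with $\mathsf{and},\mathsf{one}$ in place of $\mathsf{add},\mathsf{zero}$; (5) $\mathsf{copy};\mathsf{and}=\mathrm{id}_1$ (idempotence); $\mathsf{copy};\mathsf{add}=\mathsf{discard};\mathsf{zero}$; and distributivity $(\mathrm{id}_1\otimes\mathsf{add});\mathsf{and}=(\mathsf{copy}\otimes\mathrm{id}_2);(\mathrm{id}_1\otimes\sigma\otimes\mathrm{id}_1);(\mathsf{and}\otimes\mathsf{and});\mathsf{add}$ (i.e. $x(y+z)=xy+xz$). Let $A$ be $E$ with the idempotence equation $\mathsf{copy};\mathsf{and}=\mathrm{id}_1$ removed. $\mathbf{PolyCirc}$ is the symmetric strict monoidal category of circuits quotiented by the smallest congruence (for composition and tensor) containing $A$. $\mathbf{Poly}_{\mathbb{Z}_2}$ is the category whose objects are natural numbers and whose morphisms $a\to b$ are $b$-tuples $\langle p_1,\dots,p_b\rangle$ of polynomials $p_i\in\mathbb{Z}_2[x_1,\dots,x_a]$ (genuine polynomials, so $x^2\neq x$), composition $a\xrightarrow{p}b\xrightarrow{q}c$ being substitution $q(p_1,\dots,p_b)$, with monoidal product given by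 juxtaposition of tuples with variables renumbered. *)

theory Defs
  imports Main "HOL-Library.Poly_Mapping" "HOL-Library.Z2"
begin

datatype gen = Discard | Copy | Zero | Add | One | And

datatype circ =
    Gen gen
  | Id nat
  | Sw nat nat
  | Seq circ circ        (* diagrammatic composition f ; g *)
  | Par circ circ

fun gdom :: "gen \<Rightarrow> nat" where
  "gdom Discard = 1" | "gdom Copy = 1" | "gdom Zero = 0"
| "gdom Add = 2" | "gdom One = 0" | "gdom And = 2"

fun gcod :: "gen \<Rightarrow> nat" where
  "gcod Discard = 0" | "gcod Copy = 2" | "gcod Zero = 1"
| "gcod Add = 1" | "gcod One = 1" | "gcod And = 1"

fun cdom :: "circ \<Rightarrow> nat" where
  "cdom (Gen g) = gdom g"
| "cdom (Id n) = n"
| "cdom (Sw m n) = m + n"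
| "cdom (Seq f g) = cdom f"
| "cdom (Par f g) = cdom f + cdom g"

fun ccod :: "circ \<Rightarrow> nat" where
  "ccod (Gen g) = gcod g"
| "ccod (Id n) = n"
| "ccod (Sw m n) = n + m"
| "ccod (Seq f g) = ccod g"
| "ccod (Par f g) = ccod f + ccod g"

fun wf :: "circ \<Rightarrow> bool" where
  "wf (Gen g) = True"
| "wf (Id n) = True"
| "wf (Sw m n) = True"
| "wf (Seq f g) = (wf f \<and> wf g \<and> ccod f = cdom g)"
| "wf (Par f g) = (wf f \<and> wf g)"

definition hom :: "circ \<Rightarrow> nat \<Rightarrow> nat \<Rightarrow> bool" where
  "hom f a b \<longleftrightarrow> wf f \<and> cdom f = a \<and> ccod f = b"

abbreviation "sigma \<equiv> Sw 1 1"

text \<open>copy_n : n -> 2n (output x1..xn x1..xn) and discard_n : n -> 0\<close>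
fun copyn :: "nat \<Rightarrow> circ" where
  "copyn 0 = Id 0"
| "copyn (Suc n) = Seq (Par (Gen Copy) (copyn n)) (Par (Par (Id 1) (Sw 1 n)) (Id n))"

fun discardn :: "nat \<Rightarrow> circ" where
  "discardn 0 = Id 0"
| "discardn (Suc n) = Par (Gen Discard) (discardn n)"

inductive ceq :: "circ \<Rightarrow> circ \<Rightarrow> bool" where
  refl: "wf f \<Longrightarrow> ceq f f"
| sym: "ceq f g \<Longrightarrow> ceq g f"
| trans: "ceq f g \<Longrightarrow> ceq g h \<Longrightarrow> ceq f h"
| cong_seq: "ceq f f' \<Longrightarrow> ceq g g' \<Longrightarrow> ccod f = cdom g \<Longrightarrow> ceq (Seq f g) (Seq f' g')"
| cong_par: "ceq f f' \<Longrightarrow> ceq g g' \<Longrightarrow> ceq (Par f g) (Par f' g')"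
| id_left: "wf f \<Longrightarrow> ceq (Seq (Id (cdom f)) f) f"
| id_right: "wf f \<Longrightarrow> ceq (Seq f (Id (ccod f))) f"
| seq_assoc: "wf f \<Longrightarrow> wf g \<Longrightarrow> wf h \<Longrightarrow> ccod f = cdom g \<Longrightarrow> ccod g = cdom h \<Longrightarrow>
     ceq (Seq (Seq f g) h) (Seq f (Seq g h))"
| par_assoc: "wf f \<Longrightarrow> wf g \<Longrightarrow> wf h \<Longrightarrow> ceq (Par (Par f g) h) (Par f (Par g h))"
| par_unit_left: "wf f \<Longrightarrow> ceq (Par (Id 0) f) f"
| par_unit_right: "wf f \<Longrightarrow> ceq (Par f (Id 0)) f"
| par_id: "ceq (Par (Id m) (Id n)) (Id (m + n))"
| interchange: "wf f \<Longrightarrow> wf g \<Longrightarrow> wf h \<Longrightarrow> wf k \<Longrightarrow> ccod f = cdom g \<Longrightarrow> ccod h = cdom k \<Longrightarrow>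
     ceq (Par (Seq f g) (Seq h k)) (Seq (Par f h) (Par g k))"
| sw_inv: "ceq (Seq (Sw m n) (Sw n m)) (Id (m + n))"
| sw_hex1: "ceq (Sw m (n + k)) (Seq (Par (Sw m n) (Id k)) (Par (Id n) (Sw m k)))"
| sw_hex2: "ceq (Sw (m + n) k) (Seq (Par (Id m) (Sw n k)) (Par (Sw m k) (Id n)))"
| sw_nat: "wf f \<Longrightarrow> wf g \<Longrightarrow>
     ceq (Seq (Par f g) (Sw (ccod f) (ccod g))) (Seq (Sw (cdom f) (cdom g)) (Par g f))"
| copy_comm: "ceq (Seq (Gen Copy) sigma) (Gen Copy)"
| copy_assoc: "ceq (Seq (Gen Copy) (Par (Gen Copy) (Id 1))) (Seq (Gen Copy) (Par (Id 1) (Gen Copy)))"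
| copy_unit: "ceq (Seq (Gen Copy) (Par (Gen Discard) (Id 1))) (Id 1)"
| copy_nat: "wf f \<Longrightarrow> ceq (Seq f (copyn (ccod f))) (Seq (copyn (cdom f)) (Par f f))"
| discard_nat: "wf f \<Longrightarrow> ceq (Seq f (discardn (ccod f))) (discardn (cdom f))"
| add_comm: "ceq (Seq sigma (Gen Add)) (Gen Add)"
| add_assoc: "ceq (Seq (Par (Gen Add) (Id 1)) (Gen Add)) (Seq (Par (Id 1) (Gen Add)) (Gen Add))"
| add_unit: "ceq (Seq (Par (Gen Zero) (Id 1)) (Gen Add)) (Id 1)"
| and_comm: "ceq (Seq sigma (Gen And)) (Gen And)"
| and_assoc: "ceq (Seq (Par (Gen And) (Id 1)) (Gen And)) (Seq (Par (Id 1) (Gen And)) (Gen And))"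
| and_unit: "ceq (Seq (Par (Gen One) (Id 1)) (Gen And)) (Id 1)"
  (* (5) without idempotence *)
| char2: "ceq (Seq (Gen Copy) (Gen Add)) (Seq (Gen Discard) (Gen Zero))"
| distrib: "ceq (Seq (Par (Id 1) (Gen Add)) (Gen And))
     (Seq (Seq (Seq (Par (Gen Copy) (Id 2)) (Par (Par (Id 1) sigma) (Id 1))) (Par (Gen And) (Gen And))) (Gen Add))"

section \<open>Polynomials over Z_2 in variables x_0, x_1, ... (x_{i+1} of the paper is X i)\<close>

type_synonym mono = "nat \<Rightarrow>\<^sub>0 nat"
type_synonym zpoly = "mono \<Rightarrow>\<^sub>0 bit"

definition X :: "nat \<Rightarrow> zpoly" where
  "X i = Poly_Mapping.single (Poly_Mapping.single i 1) 1"

definition const :: "bit \<Rightarrow> zpoly" where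
  "const c = Poly_Mapping.single 0 c"

definition subst :: "(nat \<Rightarrow> zpoly) \<Rightarrow> zpoly \<Rightarrow> zpoly" where
  "subst s p = sum (\<lambda>m. const (Poly_Mapping.lookup p m) * prod (\<lambda>i. (s i) ^ (Poly_Mapping.lookup m i)) (Poly_Mapping.keys m)) (Poly_Mapping.keys p)"

definition vars_in :: "nat set \<Rightarrow> zpoly \<Rightarrow> bool" where
  "vars_in V p \<longleftrightarrow> (\<forall>m\<in>Poly_Mapping.keys p. Poly_Mapping.keys m \<subseteq> V)"

fun ginterp :: "gen \<Rightarrow> zpoly list" where
  "ginterp Discard = []"
| "ginterp Copy = [X 0, X 0]"
| "ginterp Zero = [0]"
| "ginterp Add = [X 0 + X 1]"
| "ginterp One = [1]"
| "ginterp And = [X 0 * X 1]"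

fun interp :: "circ \<Rightarrow> zpoly list" where
  "interp (Gen g) = ginterp g"
| "interp (Id n) = map X [0..<n]"
| "interp (Sw m n) = map X [m..<m + n] @ map X [0..<m]"
| "interp (Seq f g) = map (subst (\<lambda>i. interp f ! i)) (interp g)"
| "interp (Par f g) = interp f @ map (subst (\<lambda>i. X (i + cdom f))) (interp g)"

end

(*
  Soundness: evaluation of Z2-polynomials in any commutative ring with 1 + 1 = 0 is a ring
  homomorphism, so substitution is associative and the interpretation respects every
  equation of A.

  Completeness: by naturality of copying and discarding, a circuit f : a -> b equals the tuple
  of its output wires f ; proj_j, and each of these equals the circuit expr_circ of a ring
  expression e_j in the inputs.  The equations (3)-(5) make expressions that are equal modulo
  the axioms of commutative rings of characteristic 2 into equal circuits.  Expressions modulo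
  these axioms form such a ring, in which evaluating the polynomial of e at the generators
  gives back the class of e; hence expressions with equal polynomials are provably equal.

  Fullness: every polynomial is the polynomial of some expression.
*)

theory Submission
  imports Defs
begin

section \<open>Evaluation of polynomials over Z2\<close>

class ring_char2 = comm_ring_1 +
  assumes one_add_one_char2: "1 + 1 = 0"
begin

lemma add_self_char2 [simp]: "x + x = 0"
  by (metis distrib_left mult_1_right mult_zero_right one_add_one_char2)

end

instance bit :: ring_char2
  by standard simp

instance poly_mapping :: (comm_monoid_add, ring_char2) ring_char2
  by standard (metis single_one single_add one_add_one_char2 single_zero)

text \<open>A nonzero coefficient in Z2 is 1, so a polynomial evaluates to the sum of its monomials;
  this is additive exactly when 1 + 1 = 0 in the target ring.\<close>

definition eval_mono :: "(nat \<Rightarrow> 'a::comm_ring_1) \<Rightarrow> mono \<Rightarrow> 'a" where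
  "eval_mono s m = (\<Prod>i\<in>Poly_Mapping.keys m. s i ^ Poly_Mapping.lookup m i)"

definition eval_poly :: "(nat \<Rightarrow> 'a::comm_ring_1) \<Rightarrow> zpoly \<Rightarrow> 'a" where
  "eval_poly s p = (\<Sum>m\<in>Poly_Mapping.keys p. eval_mono s m)"

lemma eval_mono_superset:
  assumes "finite S" "Poly_Mapping.keys m \<subseteq> S"
  shows "eval_mono s m = (\<Prod>i\<in>S. s i ^ Poly_Mapping.lookup m i)"
  unfolding eval_mono_def
  by (rule prod.mono_neutral_left) (use assms in \<open>auto simp: in_keys_iff\<close>)

lemma eval_mono_add: "eval_mono s (m1 + m2) = eval_mono s m1 * eval_mono s m2"
proof -
  let ?S = "Poly_Mapping.keys m1 \<union> Poly_Mapping.keys m2"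
  have "eval_mono s (m1 + m2) = (\<Prod>i\<in>?S. s i ^ Poly_Mapping.lookup (m1 + m2) i)"
    using keys_add[of m1 m2] by (intro eval_mono_superset) auto
  also have "\<dots> = (\<Prod>i\<in>?S. s i ^ Poly_Mapping.lookup m1 i) * (\<Prod>i\<in>?S. s i ^ Poly_Mapping.lookup m2 i)"
    by (simp add: lookup_add power_add prod.distrib)
  also have "\<dots> = eval_mono s m1 * eval_mono s m2"
    by (subst (1 2) eval_mono_superset[where S = ?S]) auto
  finally show ?thesis .
qed

lemma eval_mono_zero [simp]: "eval_mono s 0 = 1"
  by (simp add: eval_mono_def)

lemma eval_mono_single [simp]: "eval_mono s (Poly_Mapping.single i k) = s i ^ k"
  by (simp add: eval_mono_def)

lemma eval_poly_superset:
  assumes "finite S" "Poly_Mapping.keys p \<subseteq> S"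
  shows "eval_poly s p = (\<Sum>m\<in>S. of_bit (Poly_Mapping.lookup p m) * eval_mono s m)"
proof -
  have "eval_poly s p = (\<Sum>m\<in>Poly_Mapping.keys p. of_bit (Poly_Mapping.lookup p m) * eval_mono s m)"
    unfolding eval_poly_def by (rule sum.cong) (auto simp: in_keys_iff)
  also have "\<dots> = (\<Sum>m\<in>S. of_bit (Poly_Mapping.lookup p m) * eval_mono s m)"
    by (rule sum.mono_neutral_left) (use assms in \<open>auto simp: in_keys_iff\<close>)
  finally show ?thesis .
qed

lemma of_bit_add: "(of_bit (a + b) :: 'a::ring_char2) = of_bit a + of_bit b"
  by (cases a; cases b) simp_all

lemma eval_poly_add [simp]:
  "eval_poly s (p + q) = eval_poly s p + (eval_poly s q :: 'a::ring_char2)"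
proof -
  let ?S = "Poly_Mapping.keys p \<union> Poly_Mapping.keys q"
  have "eval_poly s (p + q) = (\<Sum>m\<in>?S. of_bit (Poly_Mapping.lookup (p + q) m) * eval_mono s m)"
    using keys_add[of p q] by (intro eval_poly_superset) auto
  also have "\<dots> = (\<Sum>m\<in>?S. of_bit (Poly_Mapping.lookup p m) * eval_mono s m)
                + (\<Sum>m\<in>?S. of_bit (Poly_Mapping.lookup q m) * eval_mono s m)"
    by (simp only: lookup_add of_bit_add distrib_right sum.distrib)
  also have "\<dots> = eval_poly s p + eval_poly s q"
    by (subst (1 2) eval_poly_superset[where S = ?S]) auto
  finally show ?thesis .
qed

lemma eval_poly_zero [simp]: "eval_poly s 0 = 0"
  by (simp add: eval_poly_def)

lemma eval_poly_single: "eval_poly s (Poly_Mapping.single m c) = of_bit c * eval_mono s m"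
  by (simp add: eval_poly_def)

lemma eval_poly_one [simp]: "eval_poly s 1 = 1"
  by (simp add: eval_poly_single flip: single_one)

lemma update_eq_single_add:
  "a \<notin> Poly_Mapping.keys f \<Longrightarrow> Poly_Mapping.update a b f = Poly_Mapping.single a b + f"
  by (rule poly_mapping_eqI) (auto simp: lookup_update lookup_add lookup_single in_keys_iff)

lemma eval_poly_mult_single:
  "eval_poly s (Poly_Mapping.single m c * q) = eval_poly s (Poly_Mapping.single m c) * (eval_poly s q :: 'a::ring_char2)"
proof (induction q rule: Poly_Mapping.update_induct)
  case (update a b f)
  then show ?case
    by (simp add: update_eq_single_add distrib_left mult_single eval_poly_single
        eval_mono_add mult_ac)
qed simp

lemma eval_poly_mult [simp]:
  "eval_poly s (p * q) = eval_poly s p * (eval_poly s q :: 'a::ring_char2)"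
proof (induction p rule: Poly_Mapping.update_induct)
  case (update a b f)
  then show ?case
    by (simp add: update_eq_single_add distrib_right eval_poly_mult_single)
qed simp

lemma eval_poly_X [simp]: "eval_poly s (X i) = s i"
  by (simp add: eval_poly_def X_def)

lemma X_power: "X i ^ k = Poly_Mapping.single (Poly_Mapping.single i k) 1"
  by (induction k) (simp_all add: X_def mult_single flip: single_add)

lemma eval_mono_X: "eval_mono X m = Poly_Mapping.single m 1"
  by (induction m rule: Poly_Mapping.update_induct)
    (simp_all add: update_eq_single_add eval_mono_add X_power mult_single)

lemma eval_poly_X_id [simp]: "eval_poly X = id"
proof
  fix p
  show "eval_poly X p = id p"
    by (induction p rule: Poly_Mapping.update_induct)
      (simp_all add: update_eq_single_add eval_poly_single eval_mono_X)
qed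

lemma subst_eq_eval_poly: "subst s p = eval_poly s p"
  unfolding subst_def eval_poly_def eval_mono_def
  by (rule sum.cong) (auto simp: const_def in_keys_iff)

lemma vars_in_zero [simp]: "vars_in V 0"
  by (simp add: vars_in_def)

lemma vars_in_one [simp]: "vars_in V 1"
  by (simp add: vars_in_def)

lemma vars_in_X [simp]: "vars_in V (X i) \<longleftrightarrow> i \<in> V"
  by (simp add: vars_in_def X_def)

lemma vars_in_UNIV [simp]: "vars_in UNIV p"
  by (simp add: vars_in_def)

lemma vars_in_mono: "vars_in V p \<Longrightarrow> V \<subseteq> W \<Longrightarrow> vars_in W p"
  by (auto simp: vars_in_def)

lemma vars_in_add: "vars_in V p \<Longrightarrow> vars_in V q \<Longrightarrow> vars_in V (p + q)"
  using keys_add[of p q] by (auto simp: vars_in_def)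

lemma vars_in_mult:
  assumes "vars_in V p" "vars_in V q"
  shows "vars_in V (p * q)"
  unfolding vars_in_def
proof
  fix m
  assume "m \<in> Poly_Mapping.keys (p * q)"
  then obtain a b where "m = a + b" "a \<in> Poly_Mapping.keys p" "b \<in> Poly_Mapping.keys q"
    using keys_mult[of p q] by blast
  with assms keys_add[of a b] show "Poly_Mapping.keys m \<subseteq> V"
    unfolding vars_in_def by blast
qed

lemma zpoly_induct [consumes 1, case_names zero one var add mult]:
  assumes "vars_in V p" and "P 0" "P 1" "\<And>i. i \<in> V \<Longrightarrow> P (X i)"
    and add: "\<And>p q. P p \<Longrightarrow> P q \<Longrightarrow> P (p + q)"
    and mult: "\<And>p q. P p \<Longrightarrow> P q \<Longrightarrow> P (p * q)"
  shows "P p"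
proof -
  have power: "P (X i ^ k)" if "i \<in> V" for i k
    using that by (induction k) (simp_all add: mult \<open>P 1\<close> assms(4))
  have prod: "P (\<Prod>i\<in>S. X i ^ Poly_Mapping.lookup m i)" if "finite S" "S \<subseteq> V" for S m
    using that by (induction S rule: finite_induct) (simp_all add: mult power \<open>P 1\<close>)
  have sum: "P (\<Sum>m\<in>M. eval_mono X m)" if "finite M" "M \<subseteq> Poly_Mapping.keys p" for M
    using that
  proof (induction M rule: finite_induct)
    case (insert m M)
    with \<open>vars_in V p\<close> have "P (eval_mono X m)"
      unfolding eval_mono_def vars_in_def by (intro prod) auto
    with insert show ?case by (simp add: add)
  qed (simp add: \<open>P 0\<close>)
  have "P (eval_poly X p)"
    unfolding eval_poly_def by (rule sum) simp_all
  then show ?thesis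
    by simp
qed

lemma eval_poly_cong:
  assumes "vars_in V p" "\<And>i. i \<in> V \<Longrightarrow> s i = t i"
  shows "eval_poly s p = eval_poly t p"
  unfolding eval_poly_def eval_mono_def
  by (rule sum.cong[OF HOL.refl], rule prod.cong[OF HOL.refl]) (use assms in \<open>fastforce simp: vars_in_def\<close>)

lemma vars_in_eval_poly:
  assumes "vars_in V p" "\<And>i. i \<in> V \<Longrightarrow> vars_in W (s i)"
  shows "vars_in W (eval_poly s p)"
  using assms(1)
proof (induction rule: zpoly_induct)
  case (add p q)
  then show ?case by (simp only: eval_poly_add vars_in_add)
next
  case (mult p q)
  then show ?case by (simp only: eval_poly_mult vars_in_mult)
qed (simp_all add: assms(2))

lemma eval_poly_eval_poly:
  "eval_poly s (eval_poly t p) = eval_poly (\<lambda>i. eval_poly s (t i)) (p :: zpoly)"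
  for s :: "nat \<Rightarrow> 'a::ring_char2"
  using vars_in_UNIV[of p] by (induction rule: zpoly_induct) simp_all

section \<open>Soundness of the interpretation\<close>

definition shift :: "nat \<Rightarrow> zpoly \<Rightarrow> zpoly" where
  "shift k = eval_poly (\<lambda>i. X (i + k))"

lemma shift_X [simp]: "shift k (X i) = X (i + k)"
  by (simp add: shift_def)

lemma shift_add [simp]: "shift k (p + q) = shift k p + shift k q"
  by (simp add: shift_def)

lemma shift_mult [simp]: "shift k (p * q) = shift k p * shift k q"
  by (simp add: shift_def)

lemma shift_0 [simp]: "shift 0 p = p"
  by (simp add: shift_def)

lemma shift_shift: "shift a (shift b p) = shift (a + b) p"
  by (simp add: shift_def eval_poly_eval_poly ac_simps)

lemma eval_poly_shift: "eval_poly s (shift k p) = eval_poly (\<lambda>i. s (i + k)) p"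
  for s :: "nat \<Rightarrow> 'a::ring_char2"
  by (simp add: shift_def eval_poly_eval_poly)

lemma shift_eval_poly: "shift k (eval_poly s p) = eval_poly (\<lambda>i. shift k (s i)) p"
  by (simp add: shift_def eval_poly_eval_poly)

lemma interp_Seq: "interp (Seq f g) = map (eval_poly ((!) (interp f))) (interp g)"
  by (simp add: subst_eq_eval_poly[abs_def])

lemma interp_Par: "interp (Par f g) = interp f @ map (shift (cdom f)) (interp g)"
  by (simp add: subst_eq_eval_poly[abs_def] shift_def)

declare interp.simps(4,5) [simp del]

lemma wf_copyn [simp]: "wf (copyn n)"
  and cdom_copyn [simp]: "cdom (copyn n) = n"
  and ccod_copyn [simp]: "ccod (copyn n) = 2 * n"
  by (induction n) auto

lemma wf_discardn [simp]: "wf (discardn n)"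
  and cdom_discardn [simp]: "cdom (discardn n) = n"
  and ccod_discardn [simp]: "ccod (discardn n) = 0"
  and interp_discardn [simp]: "interp (discardn n) = []"
  by (induction n) (auto simp: interp_Par)

lemma interp_Seq_wires:
  assumes "interp f = map X xs" "interp g = map X ys" "set ys \<subseteq> {..<length xs}"
  shows "interp (Seq f g) = map X (map ((!) xs) ys)"
  using assms by (auto simp: interp_Seq)

lemma interp_Par_wires:
  assumes "interp f = map X xs" "interp g = map X ys" "cdom f = k"
  shows "interp (Par f g) = map X (xs @ map (\<lambda>i. i + k) ys)"
  using assms by (simp add: interp_Par)

lemma interp_copyn: "interp (copyn n) = map X ([0..<n] @ [0..<n])"
proof (induction n)
  case (Suc n)
  let ?copies = "[0, 0] @ map (\<lambda>i. i + 1) ([0..<n] @ [0..<n])"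
    and ?wiring = "([0] @ map (\<lambda>i. i + 1) ([1..<n + 1] @ [0..<1])) @ map (\<lambda>i. i + (n + 2)) [0..<n]"
  have "map ((!) ?copies) ?wiring = [0..<Suc n] @ [0..<Suc n]"
    by (rule nth_equalityI) (auto simp: nth_append nth_Cons')
  moreover have "interp (copyn (Suc n)) = map X (map ((!) ?copies) ?wiring)"
    unfolding copyn.simps
    by (intro interp_Seq_wires interp_Par_wires) (auto simp: Suc)
  ultimately show ?case
    by simp
qed simp

lemma interp_well_typed:
  "wf f \<Longrightarrow> length (interp f) = ccod f \<and> (\<forall>p\<in>set (interp f). vars_in {..<cdom f} p)"
proof (induction f)
  case (Gen g)
  then show ?case
    by (cases g) (auto intro!: vars_in_add vars_in_mult)
next
  case (Seq f g)
  then show ?case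
    by (auto simp: interp_Seq intro!: vars_in_eval_poly[where V = "{..<cdom g}"])
next
  case (Par f g)
  have "vars_in {..<cdom f + cdom g} (shift (cdom f) p)" if "p \<in> set (interp g)" for p
    unfolding shift_def using Par that by (auto intro!: vars_in_eval_poly)
  with Par show ?case
    by (auto simp: interp_Par intro: vars_in_mono)
qed auto

lemma length_interp: "wf f \<Longrightarrow> length (interp f) = ccod f"
  using interp_well_typed by blast

lemma vars_in_interp: "wf f \<Longrightarrow> p \<in> set (interp f) \<Longrightarrow> vars_in {..<cdom f} p"
  using interp_well_typed by blast

lemma eval_poly_nth_X: "vars_in {..<n} p \<Longrightarrow> eval_poly ((!) (map X [0..<n])) p = p"
  by (subst eval_poly_cong[where t = X]) auto

lemma map_eval_poly_cong:
  assumes "\<And>p. p \<in> set ps \<Longrightarrow> vars_in {..<n} p" "\<And>i. i < n \<Longrightarrow> s i = t i"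
  shows "map (eval_poly s) ps = map (eval_poly t) ps"
  using assms by (auto intro!: eval_poly_cong[where V = "{..<n}"])

lemma ceq_typed: "ceq f g \<Longrightarrow> wf f \<and> wf g \<and> cdom f = cdom g \<and> ccod f = ccod g"
  by (induction rule: ceq.induct) auto

lemma interp_seq_assoc:
  assumes "wf f" "wf g" "wf h" "ccod f = cdom g" "ccod g = cdom h"
  shows "interp (Seq (Seq f g) h) = interp (Seq f (Seq g h))"
proof -
  have "interp (Seq (Seq f g) h)
      = map (eval_poly (\<lambda>i. eval_poly ((!) (interp f)) (interp g ! i))) (interp h)"
    unfolding interp_Seq
    by (rule map_eval_poly_cong[where n = "cdom h"])
      (use assms in \<open>auto simp: vars_in_interp length_interp\<close>)
  then show ?thesis
    by (simp add: interp_Seq eval_poly_eval_poly)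
qed

lemma interp_interchange:
  assumes "wf f" "wf g" "wf h" "wf k" "ccod f = cdom g" "ccod h = cdom k"
  shows "interp (Par (Seq f g) (Seq h k)) = interp (Seq (Par f h) (Par g k))"
proof -
  let ?fh = "interp f @ map (shift (cdom f)) (interp h)"
  have "map (eval_poly ((!) ?fh)) (interp g) = map (eval_poly ((!) (interp f))) (interp g)"
    by (rule map_eval_poly_cong[where n = "cdom g"])
      (use assms in \<open>auto simp: vars_in_interp length_interp nth_append\<close>)
  moreover have "map (eval_poly ((!) ?fh)) (map (shift (cdom g)) (interp k))
      = map (eval_poly (\<lambda>i. shift (cdom f) (interp h ! i))) (interp k)"
    unfolding map_map o_def eval_poly_shift
    by (rule map_eval_poly_cong[where n = "cdom k"])
      (use assms in \<open>auto simp: vars_in_interp length_interp nth_append\<close>)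
  ultimately show ?thesis
    by (simp add: interp_Seq interp_Par shift_eval_poly)
qed

lemma interp_sw_nat:
  assumes "wf f" "wf g"
  shows "interp (Seq (Par f g) (Sw (ccod f) (ccod g))) = interp (Seq (Sw (cdom f) (cdom g)) (Par g f))"
proof -
  let ?sw = "map X [cdom f..<cdom f + cdom g] @ map X [0..<cdom f]"
  have "map (eval_poly ((!) ?sw)) (interp g) = map (shift (cdom f)) (interp g)"
    unfolding shift_def
    by (rule map_eval_poly_cong[where n = "cdom g"])
      (use assms in \<open>auto simp: vars_in_interp nth_append add.commute\<close>)
  moreover have "map (eval_poly ((!) ?sw)) (map (shift (cdom g)) (interp f)) = interp f"
    unfolding map_map o_def eval_poly_shift
    by (subst map_eval_poly_cong[where n = "cdom f" and t = X])
      (use assms in \<open>auto simp: vars_in_interp nth_append\<close>)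
  moreover have "map (eval_poly ((!) (interp f @ map (shift (cdom f)) (interp g))))
      (map X [ccod f..<ccod f + ccod g] @ map X [0..<ccod f]) = map (shift (cdom f)) (interp g) @ interp f"
    using assms by (auto simp: length_interp nth_append intro!: nth_equalityI)
  ultimately show ?thesis
    by (simp add: interp_Seq interp_Par)
qed

lemma interp_copy_Par:
  assumes "wf f" "wf g" "cdom f = a" "cdom g = a"
  shows "interp (Seq (copyn a) (Par f g)) = interp f @ interp g"
proof -
  let ?cp = "map X ([0..<a] @ [0..<a])"
  have "map (eval_poly ((!) ?cp)) (interp f) = interp f"
    by (subst map_eval_poly_cong[where n = a and t = X])
      (use assms in \<open>auto simp: vars_in_interp nth_append\<close>)
  moreover have "map (eval_poly ((!) ?cp)) (map (shift a) (interp g)) = interp g"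
    unfolding map_map o_def eval_poly_shift
    by (subst map_eval_poly_cong[where n = a and t = X])
      (use assms vars_in_interp[of g] in \<open>auto simp: nth_append\<close>)
  ultimately show ?thesis
    using assms by (simp add: interp_Seq interp_Par interp_copyn)
qed

lemma interp_copy_nat:
  assumes "wf f"
  shows "interp (Seq f (copyn (ccod f))) = interp (Seq (copyn (cdom f)) (Par f f))"
proof -
  have "interp (Seq f (copyn (ccod f))) = interp f @ interp f"
    using assms
    by (auto simp: interp_Seq interp_copyn length_interp nth_append intro!: nth_equalityI
        simp del: map_append)
  also have "\<dots> = interp (Seq (copyn (cdom f)) (Par f f))"
    using assms by (simp add: interp_copy_Par)
  finally show ?thesis .
qed

lemma interp_sw_hex1: "interp (Sw m (n + k)) = interp (Seq (Par (Sw m n) (Id k)) (Par (Id n) (Sw m k)))"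
proof -
  have "map ((!) (([m..<m + n] @ [0..<m]) @ map (\<lambda>i. i + (m + n)) [0..<k]))
      ([0..<n] @ map (\<lambda>i. i + n) ([m..<m + k] @ [0..<m])) = [m..<m + (n + k)] @ [0..<m]"
    by (rule nth_equalityI) (auto simp: nth_append)
  moreover have "interp (Seq (Par (Sw m n) (Id k)) (Par (Id n) (Sw m k)))
      = map X (map ((!) (([m..<m + n] @ [0..<m]) @ map (\<lambda>i. i + (m + n)) [0..<k]))
          ([0..<n] @ map (\<lambda>i. i + n) ([m..<m + k] @ [0..<m])))"
    by (intro interp_Seq_wires interp_Par_wires) auto
  ultimately show ?thesis
    by simp
qed

lemma interp_sw_hex2: "interp (Sw (m + n) k) = interp (Seq (Par (Id m) (Sw n k)) (Par (Sw m k) (Id n)))"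
proof -
  have "map ((!) ([0..<m] @ map (\<lambda>i. i + m) ([n..<n + k] @ [0..<n])))
      (([m..<m + k] @ [0..<m]) @ map (\<lambda>i. i + (m + k)) [0..<n]) = [m + n..<m + n + k] @ [0..<m + n]"
    by (rule nth_equalityI) (auto simp: nth_append)
  moreover have "interp (Seq (Par (Id m) (Sw n k)) (Par (Sw m k) (Id n)))
      = map X (map ((!) ([0..<m] @ map (\<lambda>i. i + m) ([n..<n + k] @ [0..<n])))
          (([m..<m + k] @ [0..<m]) @ map (\<lambda>i. i + (m + k)) [0..<n]))"
    by (intro interp_Seq_wires interp_Par_wires) auto
  ultimately show ?thesis
    by simp
qed

theorem ceq_imp_interp_eq: "ceq f g \<Longrightarrow> interp f = interp g"
proof (induction rule: ceq.induct)
  case (cong_par f f' g g')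
  then show ?case
    by (simp add: interp_Par ceq_typed)
next
  case (id_left f)
  then show ?case
    by (auto simp: interp_Seq eval_poly_nth_X vars_in_interp intro!: map_idI)
next
  case (id_right f)
  then show ?case
    by (auto simp: interp_Seq length_interp[symmetric] o_def map_nth)
next
  case (par_id m n)
  then show ?case
    by (auto simp: interp_Par nth_append intro!: nth_equalityI)
next
  case (sw_inv m n)
  then show ?case
    by (auto simp: interp_Seq nth_append intro!: nth_equalityI)
qed (simp_all only: interp_seq_assoc interp_interchange interp_sw_nat interp_copy_nat
      interp_sw_hex1 interp_sw_hex2,
     simp_all add: interp_Seq interp_Par shift_shift eval_poly_shift map_idI ac_simps distrib_left)

section \<open>Derived circuit equations\<close>

lemmas [trans] = ceq.trans

text \<open>Rules of \<open>ceq\<close> restated (objects as separate variables, one-sided congruences,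
  reversed orientation) so that \<open>rule\<close> applies them to arbitrary instances.\<close>

lemma ceq_id_left: "wf f \<Longrightarrow> cdom f = n \<Longrightarrow> ceq (Seq (Id n) f) f"
  using ceq.id_left by blast

lemma ceq_id_right: "wf f \<Longrightarrow> ccod f = n \<Longrightarrow> ceq (Seq f (Id n)) f"
  using ceq.id_right by blast

lemma ceq_sw_nat:
  "wf f \<Longrightarrow> wf g \<Longrightarrow> cdom f = a \<Longrightarrow> cdom g = c \<Longrightarrow> ccod f = b \<Longrightarrow> ccod g = d \<Longrightarrow>
    ceq (Seq (Par f g) (Sw b d)) (Seq (Sw a c) (Par g f))"
  using ceq.sw_nat by blast

lemma ceq_copy_nat:
  "wf f \<Longrightarrow> cdom f = a \<Longrightarrow> ccod f = b \<Longrightarrow> ceq (Seq f (copyn b)) (Seq (copyn a) (Par f f))"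
  using ceq.copy_nat by blast

lemma ceq_discard_nat:
  "wf f \<Longrightarrow> cdom f = a \<Longrightarrow> ccod f = b \<Longrightarrow> ceq (Seq f (discardn b)) (discardn a)"
  using ceq.discard_nat by blast

lemma ceq_Seq_left: "ceq f f' \<Longrightarrow> wf g \<Longrightarrow> ccod f = cdom g \<Longrightarrow> ceq (Seq f g) (Seq f' g)"
  by (rule ceq.cong_seq) (auto intro: ceq.refl)

lemma ceq_Seq_right: "ceq g g' \<Longrightarrow> wf f \<Longrightarrow> ccod f = cdom g \<Longrightarrow> ceq (Seq f g) (Seq f g')"
  by (rule ceq.cong_seq) (auto intro: ceq.refl)

lemma ceq_Par_left: "ceq f f' \<Longrightarrow> wf g \<Longrightarrow> ceq (Par f g) (Par f' g)"
  by (rule ceq.cong_par) (auto intro: ceq.refl)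

lemma ceq_Par_right: "ceq g g' \<Longrightarrow> wf f \<Longrightarrow> ceq (Par f g) (Par f g')"
  by (rule ceq.cong_par) (auto intro: ceq.refl)

lemma ceq_seq_assoc_sym:
  "wf f \<Longrightarrow> wf g \<Longrightarrow> wf h \<Longrightarrow> ccod f = cdom g \<Longrightarrow> ccod g = cdom h \<Longrightarrow>
    ceq (Seq f (Seq g h)) (Seq (Seq f g) h)"
  by (rule ceq.sym, rule ceq.seq_assoc)

lemma ceq_par_assoc_sym: "wf f \<Longrightarrow> wf g \<Longrightarrow> wf h \<Longrightarrow> ceq (Par f (Par g h)) (Par (Par f g) h)"
  by (rule ceq.sym, rule ceq.par_assoc)

lemma ceq_interchange_sym:
  "wf f \<Longrightarrow> wf g \<Longrightarrow> wf h \<Longrightarrow> wf k \<Longrightarrow> ccod f = cdom g \<Longrightarrow> ccod h = cdom k \<Longrightarrow>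
    ceq (Seq (Par f h) (Par g k)) (Par (Seq f g) (Seq h k))"
  by (rule ceq.sym, rule ceq.interchange)

lemma ceq_par_id_sym: "ceq (Id (a + b)) (Par (Id a) (Id b))"
  by (rule ceq.sym, rule ceq.par_id)

lemma ceq_Sw_0_left: "ceq (Sw 0 k) (Id k)"
proof -
  have idem: "ceq (Sw 0 k) (Seq (Sw 0 k) (Sw 0 k))"
  proof -
    have "ceq (Sw 0 k) (Seq (Par (Id 0) (Sw 0 k)) (Par (Sw 0 k) (Id 0)))"
      using ceq.sw_hex2[of 0 0 k] by simp
    also have "ceq \<dots> (Seq (Sw 0 k) (Sw 0 k))"
      by (rule ceq.cong_seq) (auto intro: ceq.par_unit_left ceq.par_unit_right)
    finally show ?thesis .
  qed
  have "ceq (Sw 0 k) (Seq (Sw 0 k) (Id k))"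
    by (rule ceq.sym, rule ceq_id_right) auto
  also have "ceq \<dots> (Seq (Sw 0 k) (Seq (Sw 0 k) (Sw k 0)))"
    by (rule ceq_Seq_right, rule ceq.sym) (use ceq.sw_inv[of 0 k] in auto)
  also have "ceq \<dots> (Seq (Seq (Sw 0 k) (Sw 0 k)) (Sw k 0))"
    by (rule ceq_seq_assoc_sym) auto
  also have "ceq \<dots> (Seq (Sw 0 k) (Sw k 0))"
    by (rule ceq_Seq_left, rule ceq.sym, rule idem) auto
  also have "ceq \<dots> (Id k)"
    using ceq.sw_inv[of 0 k] by simp
  finally show ?thesis .
qed

lemma ceq_Sw_0_right: "ceq (Sw k 0) (Id k)"
proof -
  have "ceq (Sw k 0) (Seq (Sw k 0) (Id k))"
    by (rule ceq.sym, rule ceq_id_right) auto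
  also have "ceq \<dots> (Seq (Sw k 0) (Sw 0 k))"
    by (rule ceq_Seq_right, rule ceq.sym, rule ceq_Sw_0_left) auto
  also have "ceq \<dots> (Id k)"
    using ceq.sw_inv[of k 0] by simp
  finally show ?thesis .
qed

lemma ceq_discardn_add: "ceq (discardn (m + n)) (Par (discardn m) (discardn n))"
proof (induction m)
  case 0 then show ?case by (simp, rule ceq.sym, rule ceq.par_unit_left) simp
next
  case (Suc m)
  have "ceq (discardn (Suc m + n)) (Par (Gen Discard) (Par (discardn m) (discardn n)))"
    by (simp, rule ceq_Par_right[OF Suc]) simp
  also have "ceq \<dots> (Par (discardn (Suc m)) (discardn n))"
    by (simp, rule ceq_par_assoc_sym) auto
  finally show ?case .
qed

lemma ceq_copy_counit_right: "ceq (Seq (Gen Copy) (Par (Id 1) (Gen Discard))) (Id 1)"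
proof -
  have "ceq (Seq (Gen Copy) (Par (Id 1) (Gen Discard)))
      (Seq (Seq (Gen Copy) (Sw 1 1)) (Par (Id 1) (Gen Discard)))"
    by (rule ceq_Seq_left, rule ceq.sym, rule ceq.copy_comm) auto
  also have "ceq \<dots> (Seq (Gen Copy) (Seq (Sw 1 1) (Par (Id 1) (Gen Discard))))"
    by (rule ceq.seq_assoc) auto
  also have "ceq \<dots> (Seq (Gen Copy) (Seq (Par (Gen Discard) (Id 1)) (Sw 0 1)))"
    by (rule ceq_Seq_right, rule ceq.sym, rule ceq_sw_nat) auto
  also have "ceq \<dots> (Seq (Gen Copy) (Seq (Par (Gen Discard) (Id 1)) (Id 1)))"
    by (rule ceq_Seq_right, rule ceq_Seq_right, rule ceq_Sw_0_left) auto
  also have "ceq \<dots> (Seq (Gen Copy) (Par (Gen Discard) (Id 1)))"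
    by (rule ceq_Seq_right, rule ceq_id_right) auto
  also have "ceq \<dots> (Id 1)"
    by (rule ceq.copy_unit)
  finally show ?thesis .
qed

lemma ceq_Seq_Sw_Par_nat:
  assumes "wf h" "wf g" "wf h'" "cdom h = a" "cdom g = b" "cdom h' = c"
    and "ccod h = p" "ccod g = q" "ccod h' = r"
  shows "ceq (Seq (Par (Id a) (Sw c b)) (Par h (Par g h'))) (Seq (Par h (Par h' g)) (Par (Id p) (Sw r q)))"
proof -
  have "ceq (Seq (Par (Id a) (Sw c b)) (Par h (Par g h'))) (Par (Seq (Id a) h) (Seq (Sw c b) (Par g h')))"
    by (rule ceq_interchange_sym) (use assms in auto)
  also have "ceq \<dots> (Par (Seq h (Id p)) (Seq (Par h' g) (Sw r q)))"
  proof (rule ceq.cong_par)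
    show "ceq (Seq (Id a) h) (Seq h (Id p))"
      by (rule ceq.trans[OF ceq_id_left ceq.sym[OF ceq_id_right]]) (use assms in auto)
    show "ceq (Seq (Sw c b) (Par g h')) (Seq (Par h' g) (Sw r q))"
      by (rule ceq.sym, rule ceq_sw_nat) (use assms in auto)
  qed
  also have "ceq \<dots> (Seq (Par h (Par h' g)) (Par (Id p) (Sw r q)))"
    by (rule ceq.interchange) (use assms in auto)
  finally show ?thesis .
qed

lemma ceq_middle_interchange_nat:
  assumes w: "wf h" "wf g" "wf h'" "wf g'"
    and "cdom h = a" "cdom g = b" "cdom h' = c" "cdom g' = d"
    and "ccod h = p" "ccod g = q" "ccod h' = r" "ccod g' = s"
  shows "ceq (Seq (Par (Par (Id a) (Sw c b)) (Id d)) (Par (Par h g) (Par h' g')))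
             (Seq (Par (Par h h') (Par g g')) (Par (Par (Id p) (Sw r q)) (Id s)))"
proof -
  have "ceq (Par (Par h g) (Par h' g')) (Par (Par h (Par g h')) g')"
    by (rule ceq.trans[OF ceq_par_assoc_sym ceq_Par_left[OF ceq.par_assoc]]) (use w in auto)
  then have "ceq (Seq (Par (Par (Id a) (Sw c b)) (Id d)) (Par (Par h g) (Par h' g')))
      (Seq (Par (Par (Id a) (Sw c b)) (Id d)) (Par (Par h (Par g h')) g'))"
    by (rule ceq_Seq_right) (use assms in auto)
  also have "ceq \<dots> (Par (Seq (Par (Id a) (Sw c b)) (Par h (Par g h'))) (Seq (Id d) g'))"
    by (rule ceq_interchange_sym) (use assms in auto)
  also have "ceq \<dots> (Par (Seq (Par h (Par h' g)) (Par (Id p) (Sw r q))) (Seq g' (Id s)))"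
    by (rule ceq.cong_par[OF ceq_Seq_Sw_Par_nat ceq.trans[OF ceq_id_left ceq.sym[OF ceq_id_right]]])
      (use assms in auto)
  also have "ceq \<dots> (Seq (Par (Par h (Par h' g)) g') (Par (Par (Id p) (Sw r q)) (Id s)))"
    by (rule ceq.interchange) (use assms in auto)
  also have "ceq \<dots> (Seq (Par (Par h h') (Par g g')) (Par (Par (Id p) (Sw r q)) (Id s)))"
    by (rule ceq_Seq_left, rule ceq.trans[OF ceq_Par_left[OF ceq_par_assoc_sym] ceq.par_assoc])
      (use assms in auto)
  finally show ?thesis .
qed

lemma ceq_copyn_Suc_Par:
  assumes "wf h" "wf g" "wf h'" "wf g'"
    and "cdom h = 1" "cdom g = n" "cdom h' = 1" "cdom g' = n"
    and "ccod h = p" "ccod g = q" "ccod h' = r" "ccod g' = s"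
  shows "ceq (Seq (copyn (Suc n)) (Par (Par h g) (Par h' g')))
    (Seq (Par (Seq (Gen Copy) (Par h h')) (Seq (copyn n) (Par g g'))) (Par (Par (Id p) (Sw r q)) (Id s)))"
proof -
  let ?copies = "Par (Gen Copy) (copyn n)" and ?M = "Par (Par (Id p) (Sw r q)) (Id s)"
  have "ceq (Seq (copyn (Suc n)) (Par (Par h g) (Par h' g')))
      (Seq ?copies (Seq (Par (Par (Id 1) (Sw 1 n)) (Id n)) (Par (Par h g) (Par h' g'))))"
    by (simp only: copyn.simps, rule ceq.seq_assoc) (use assms in auto)
  also have "ceq \<dots> (Seq ?copies (Seq (Par (Par h h') (Par g g')) ?M))"
    by (rule ceq_Seq_right, rule ceq_middle_interchange_nat) (use assms in auto)
  also have "ceq \<dots> (Seq (Seq ?copies (Par (Par h h') (Par g g'))) ?M)"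
    by (rule ceq_seq_assoc_sym) (use assms in auto)
  also have "ceq \<dots> (Seq (Par (Seq (Gen Copy) (Par h h')) (Seq (copyn n) (Par g g'))) ?M)"
    by (rule ceq_Seq_left, rule ceq_interchange_sym) (use assms in auto)
  finally show ?thesis .
qed

lemma ceq_Seq_Par_Id: "ceq (Seq (Par (Id a) (Id b)) (Par (Id a) (Id b))) (Id (a + b))"
  using ceq.trans[OF ceq.cong_seq[OF ceq.par_id ceq.par_id] ceq_id_left[of "Id (a + b)"]] by simp

lemma ceq_copyn_counit_right: "ceq (Seq (copyn n) (Par (Id n) (discardn n))) (Id n)"
proof (induction n)
  case 0
  have "ceq (Seq (Id 0) (Par (Id 0) (Id 0))) (Par (Id 0) (Id 0))" by (rule ceq_id_left) auto
  also have "ceq \<dots> (Id 0)" using ceq.par_id[of 0 0] by simp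
  finally show ?case by simp
next
  case (Suc n)
  have "ceq (Seq (copyn (Suc n)) (Par (Id (Suc n)) (discardn (Suc n))))
            (Seq (copyn (Suc n)) (Par (Par (Id 1) (Id n)) (Par (Gen Discard) (discardn n))))"
    by (simp only: discardn.simps, rule ceq_Seq_right, rule ceq_Par_left)
      (use ceq_par_id_sym[of 1 n] in auto)
  also have "ceq \<dots> (Seq (Par (Seq (Gen Copy) (Par (Id 1) (Gen Discard)))
      (Seq (copyn n) (Par (Id n) (discardn n)))) (Par (Par (Id 1) (Sw 0 n)) (Id 0)))"
    by (rule ceq_copyn_Suc_Par) auto
  also have "ceq \<dots> (Seq (Par (Id 1) (Id n)) (Par (Par (Id 1) (Id n)) (Id 0)))"
    by (rule ceq.cong_seq, rule ceq.cong_par[OF ceq_copy_counit_right Suc],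
        rule ceq_Par_left, rule ceq_Par_right, rule ceq_Sw_0_left) auto
  also have "ceq \<dots> (Seq (Par (Id 1) (Id n)) (Par (Id 1) (Id n)))"
    by (rule ceq_Seq_right, rule ceq.par_unit_right) auto
  also have "ceq \<dots> (Id (Suc n))"
    using ceq_Seq_Par_Id[of 1 n] by simp
  finally show ?case .
qed

lemma ceq_copyn_counit_left: "ceq (Seq (copyn n) (Par (discardn n) (Id n))) (Id n)"
proof (induction n)
  case 0
  have "ceq (Seq (Id 0) (Par (Id 0) (Id 0))) (Par (Id 0) (Id 0))" by (rule ceq_id_left) auto
  also have "ceq \<dots> (Id 0)" using ceq.par_id[of 0 0] by simp
  finally show ?case by simp
next
  case (Suc n)
  have "ceq (Seq (copyn (Suc n)) (Par (discardn (Suc n)) (Id (Suc n))))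
            (Seq (copyn (Suc n)) (Par (Par (Gen Discard) (discardn n)) (Par (Id 1) (Id n))))"
    by (simp only: discardn.simps, rule ceq_Seq_right, rule ceq_Par_right)
      (use ceq_par_id_sym[of 1 n] in auto)
  also have "ceq \<dots> (Seq (Par (Seq (Gen Copy) (Par (Gen Discard) (Id 1)))
      (Seq (copyn n) (Par (discardn n) (Id n)))) (Par (Par (Id 0) (Sw 1 0)) (Id n)))"
    by (rule ceq_copyn_Suc_Par) auto
  also have "ceq \<dots> (Seq (Par (Id 1) (Id n)) (Par (Id 1) (Id n)))"
    by (rule ceq.cong_seq, rule ceq.cong_par[OF ceq.copy_unit Suc], rule ceq_Par_left,
        rule ceq.trans[OF ceq.par_unit_left ceq_Sw_0_right]) auto
  also have "ceq \<dots> (Id (Suc n))"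
    using ceq_Seq_Par_Id[of 1 n] by simp
  finally show ?case .
qed

lemma ceq_Par_discard_right:
  assumes "wf u" "cdom u = a" "wf d" "ccod d = 0"
  shows "ceq (Par u d) (Seq (Par (Id a) d) u)"
proof -
  have "ceq (Par u d) (Par (Seq (Id a) u) (Seq d (Id 0)))"
    by (rule ceq.cong_par[OF ceq.sym[OF ceq_id_left] ceq.sym[OF ceq_id_right]]) (use assms in auto)
  also have "ceq \<dots> (Seq (Par (Id a) d) (Par u (Id 0)))"
    by (rule ceq.interchange) (use assms in auto)
  also have "ceq \<dots> (Seq (Par (Id a) d) u)"
    by (rule ceq_Seq_right, rule ceq.par_unit_right) (use assms in auto)
  finally show ?thesis .
qed

lemma ceq_Par_discard_left:
  assumes "wf u" "cdom u = c" "wf d" "ccod d = 0"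
  shows "ceq (Par d u) (Seq (Par d (Id c)) u)"
proof -
  have "ceq (Par d u) (Par (Seq d (Id 0)) (Seq (Id c) u))"
    by (rule ceq.cong_par[OF ceq.sym[OF ceq_id_right] ceq.sym[OF ceq_id_left]]) (use assms in auto)
  also have "ceq \<dots> (Seq (Par d (Id c)) (Par (Id 0) u))"
    by (rule ceq.interchange) (use assms in auto)
  also have "ceq \<dots> (Seq (Par d (Id c)) u)"
    by (rule ceq_Seq_right, rule ceq.par_unit_left) (use assms in auto)
  finally show ?thesis .
qed

lemma ceq_copyn_discardn_right:
  assumes "wf u" "cdom u = a"
  shows "ceq (Seq (copyn a) (Par u (discardn a))) u"
proof -
  have "ceq (Seq (copyn a) (Par u (discardn a))) (Seq (copyn a) (Seq (Par (Id a) (discardn a)) u))"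
    by (rule ceq_Seq_right, rule ceq_Par_discard_right) (use assms in auto)
  also have "ceq \<dots> (Seq (Seq (copyn a) (Par (Id a) (discardn a))) u)"
    by (rule ceq_seq_assoc_sym) (use assms in auto)
  also have "ceq \<dots> (Seq (Id a) u)"
    by (rule ceq_Seq_left, rule ceq_copyn_counit_right) (use assms in auto)
  also have "ceq \<dots> u"
    by (rule ceq_id_left) (use assms in auto)
  finally show ?thesis .
qed

lemma ceq_copyn_discardn_left:
  assumes "wf u" "cdom u = a"
  shows "ceq (Seq (copyn a) (Par (discardn a) u)) u"
proof -
  have "ceq (Seq (copyn a) (Par (discardn a) u)) (Seq (copyn a) (Seq (Par (discardn a) (Id a)) u))"
    by (rule ceq_Seq_right, rule ceq_Par_discard_left) (use assms in auto)
  also have "ceq \<dots> (Seq (Seq (copyn a) (Par (discardn a) (Id a))) u)"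
    by (rule ceq_seq_assoc_sym) (use assms in auto)
  also have "ceq \<dots> (Seq (Id a) u)"
    by (rule ceq_Seq_left, rule ceq_copyn_counit_left) (use assms in auto)
  also have "ceq \<dots> u"
    by (rule ceq_id_left) (use assms in auto)
  finally show ?thesis .
qed

lemma ceq_Seq_Discard:
  "wf h \<Longrightarrow> cdom h = a \<Longrightarrow> ccod h = 1 \<Longrightarrow> ceq (Seq h (Gen Discard)) (discardn a)"
  using ceq_Seq_right[OF ceq.sym[OF ceq.par_unit_right[of "Gen Discard"]], of h]
    ceq_discard_nat[of h a 1]
  by (auto intro: ceq.trans)

definition proj :: "nat \<Rightarrow> nat \<Rightarrow> circ" where
  "proj n i = Par (discardn i) (Par (Id 1) (discardn (n - Suc i)))"

lemma hom_proj [simp]: "wf (proj n i)" "ccod (proj n i) = 1" "i < n \<Longrightarrow> cdom (proj n i) = n"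
  by (auto simp: proj_def)

lemma ceq_proj_1_0: "ceq (proj 1 0) (Id 1)"
proof -
  have "ceq (proj 1 0) (Par (Id 0) (Id 1))"
    unfolding proj_def by (simp, rule ceq_Par_right, rule ceq.par_unit_right) auto
  also have "ceq \<dots> (Id 1)"
    by (rule ceq.par_unit_left) auto
  finally show ?thesis .
qed

lemma ceq_proj_0: "ceq (proj (Suc b) 0) (Par (Id 1) (discardn b))"
  unfolding proj_def by (simp, rule ceq.par_unit_left) auto

lemma ceq_proj_Suc: "j < b \<Longrightarrow> ceq (proj (Suc b) (Suc j)) (Par (Gen Discard) (proj b j))"
  unfolding proj_def by (simp, rule ceq.par_assoc) auto

lemma ceq_Par_proj_discardn:
  assumes "i < n"
  shows "ceq (Par (proj n i) (discardn m)) (proj (n + m) i)"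
proof -
  have "ceq (Par (proj n i) (discardn m))
      (Par (discardn i) (Par (Par (Id 1) (discardn (n - Suc i))) (discardn m)))"
    unfolding proj_def by (rule ceq.par_assoc) auto
  also have "ceq \<dots> (Par (discardn i) (Par (Id 1) (Par (discardn (n - Suc i)) (discardn m))))"
    by (rule ceq_Par_right, rule ceq.par_assoc) auto
  also have "ceq \<dots> (Par (discardn i) (Par (Id 1) (discardn (n - Suc i + m))))"
    by (rule ceq_Par_right, rule ceq_Par_right, rule ceq.sym, rule ceq_discardn_add) auto
  also have "Par (discardn i) (Par (Id 1) (discardn (n - Suc i + m))) = proj (n + m) i"
    unfolding proj_def using assms by (simp add: Suc_diff_le)
  finally show ?thesis .
qed

lemma ceq_Par_discardn_proj:
  assumes "k < m"
  shows "ceq (Par (discardn n) (proj m k)) (proj (n + m) (n + k))"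
proof -
  have "ceq (Par (discardn n) (proj m k))
      (Par (Par (discardn n) (discardn k)) (Par (Id 1) (discardn (m - Suc k))))"
    unfolding proj_def by (rule ceq_par_assoc_sym) auto
  also have "ceq \<dots> (Par (discardn (n + k)) (Par (Id 1) (discardn (m - Suc k))))"
    by (rule ceq_Par_left, rule ceq.sym, rule ceq_discardn_add) auto
  also have "Par (discardn (n + k)) (Par (Id 1) (discardn (m - Suc k))) = proj (n + m) (n + k)"
    unfolding proj_def using assms by simp
  finally show ?thesis .
qed

fun tuple :: "nat \<Rightarrow> circ list \<Rightarrow> circ" where
  "tuple a [] = discardn a"
| "tuple a (h # hs) = Seq (copyn a) (Par h (tuple a hs))"

definition hom_list :: "circ list \<Rightarrow> nat \<Rightarrow> bool" where
  "hom_list hs a \<longleftrightarrow> (\<forall>h\<in>set hs. hom h a 1)"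

lemma hom_list_simps [simp]:
  "hom_list [] a"
  "hom_list (h # hs) a \<longleftrightarrow> wf h \<and> cdom h = a \<and> ccod h = 1 \<and> hom_list hs a"
  by (auto simp: hom_list_def hom_def)

lemma cdom_tuple [simp]: "cdom (tuple a hs) = a"
  by (cases hs) auto

lemma wf_tuple [simp]: "hom_list hs a \<Longrightarrow> wf (tuple a hs)"
  and ccod_tuple [simp]: "hom_list hs a \<Longrightarrow> ccod (tuple a hs) = length hs"
  by (induction hs) auto

lemma ceq_Seq_copyn_Par:
  assumes "wf f" "cdom f = a" "ccod f = b" "wf t1" "cdom t1 = b" "wf t2" "cdom t2 = b"
  shows "ceq (Seq f (Seq (copyn b) (Par t1 t2))) (Seq (copyn a) (Par (Seq f t1) (Seq f t2)))"
proof -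
  have "ceq (Seq f (Seq (copyn b) (Par t1 t2))) (Seq (Seq f (copyn b)) (Par t1 t2))"
    by (rule ceq_seq_assoc_sym) (use assms in auto)
  also have "ceq \<dots> (Seq (Seq (copyn a) (Par f f)) (Par t1 t2))"
    by (rule ceq_Seq_left, rule ceq_copy_nat) (use assms in auto)
  also have "ceq \<dots> (Seq (copyn a) (Seq (Par f f) (Par t1 t2)))"
    by (rule ceq.seq_assoc) (use assms in auto)
  also have "ceq \<dots> (Seq (copyn a) (Par (Seq f t1) (Seq f t2)))"
    by (rule ceq_Seq_right, rule ceq_interchange_sym) (use assms in auto)
  finally show ?thesis .
qed

lemma ceq_Seq_tuple:
  assumes "wf f" "cdom f = a" "ccod f = b" "hom_list hs b"
  shows "ceq (Seq f (tuple b hs)) (tuple a (map (Seq f) hs))"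
  using assms(4)
proof (induction hs)
  case Nil
  then show ?case
    using assms by (simp add: ceq_discard_nat)
next
  case (Cons h hs)
  have "ceq (Seq f (tuple b (h # hs))) (Seq (copyn a) (Par (Seq f h) (Seq f (tuple b hs))))"
    by (simp only: tuple.simps, rule ceq_Seq_copyn_Par) (use assms Cons in auto)
  also have "ceq \<dots> (Seq (copyn a) (Par (Seq f h) (tuple a (map (Seq f) hs))))"
    by (rule ceq_Seq_right, rule ceq_Par_right) (use assms Cons in auto)
  finally show ?case
    by simp
qed

lemma ceq_tuple_Cons_Seq_Par:
  assumes "wf h" "cdom h = a" "ccod h = 1" "hom_list hs a" "wf u" "cdom u = 1"
    and "wf v" "cdom v = length hs"
  shows "ceq (Seq (tuple a (h # hs)) (Par u v)) (Seq (copyn a) (Par (Seq h u) (Seq (tuple a hs) v)))"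
proof -
  have "ceq (Seq (tuple a (h # hs)) (Par u v)) (Seq (copyn a) (Seq (Par h (tuple a hs)) (Par u v)))"
    by (simp only: tuple.simps, rule ceq.seq_assoc) (use assms in auto)
  also have "ceq \<dots> (Seq (copyn a) (Par (Seq h u) (Seq (tuple a hs) v)))"
    by (rule ceq_Seq_right, rule ceq_interchange_sym) (use assms in auto)
  finally show ?thesis .
qed

lemma ceq_tuple_proj:
  assumes "hom_list hs a" "j < length hs"
  shows "ceq (Seq (tuple a hs) (proj (length hs) j)) (hs ! j)"
  using assms
proof (induction hs arbitrary: j)
  case (Cons h hs)
  let ?T = "tuple a hs"
  show ?case
  proof (cases j)
    case 0
    have "ceq (Seq (tuple a (h # hs)) (proj (Suc (length hs)) 0))
        (Seq (tuple a (h # hs)) (Par (Id 1) (discardn (length hs))))"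
      by (rule ceq_Seq_right[OF ceq_proj_0]) (use Cons in auto)
    also have "ceq \<dots> (Seq (copyn a) (Par (Seq h (Id 1)) (Seq ?T (discardn (length hs)))))"
      by (rule ceq_tuple_Cons_Seq_Par) (use Cons in auto)
    also have "ceq \<dots> (Seq (copyn a) (Par h (discardn a)))"
      by (rule ceq_Seq_right, rule ceq.cong_par[OF ceq_id_right ceq_discard_nat]) (use Cons in auto)
    also have "ceq \<dots> h"
      by (rule ceq_copyn_discardn_right) (use Cons in auto)
    finally show ?thesis
      using 0 by simp
  next
    case (Suc i)
    have "ceq (Seq (tuple a (h # hs)) (proj (Suc (length hs)) (Suc i)))
        (Seq (tuple a (h # hs)) (Par (Gen Discard) (proj (length hs) i)))"
      by (rule ceq_Seq_right[OF ceq_proj_Suc]) (use Cons Suc in auto)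
    also have "ceq \<dots> (Seq (copyn a) (Par (Seq h (Gen Discard)) (Seq ?T (proj (length hs) i))))"
      by (rule ceq_tuple_Cons_Seq_Par) (use Cons Suc in auto)
    also have "ceq \<dots> (Seq (copyn a) (Par (discardn a) (hs ! i)))"
      by (rule ceq_Seq_right, rule ceq.cong_par[OF ceq_Seq_Discard Cons.IH]) (use Cons Suc in auto)
    also have "ceq \<dots> (hs ! i)"
      by (rule ceq_copyn_discardn_left) (use Cons Suc in \<open>auto simp: hom_list_def hom_def\<close>)
    finally show ?thesis
      using Suc by simp
  qed
qed simp

lemma ceq_tuple_cong:
  assumes "\<And>x. x \<in> set xs \<Longrightarrow> ceq (F x) (G x)" "\<And>x. x \<in> set xs \<Longrightarrow> cdom (F x) = a"
  shows "ceq (tuple a (map F xs)) (tuple a (map G xs))"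
  using assms
proof (induction xs)
  case Nil
  then show ?case
    by (simp add: ceq.refl)
next
  case (Cons x xs)
  then show ?case
    by (simp, intro ceq_Seq_right ceq_Par_left ceq.cong_par) auto
qed

lemma ceq_tuple_projs_Suc:
  assumes "ceq (tuple b (map (proj b) [0..<b])) (Id b)"
  shows "ceq (tuple (Suc b) (map (\<lambda>j. proj (Suc b) (Suc j)) [0..<b])) (Par (Gen Discard) (Id b))"
proof -
  let ?D = "Par (Gen Discard) (Id b)"
  have "ceq (tuple (Suc b) (map (\<lambda>j. proj (Suc b) (Suc j)) [0..<b]))
      (tuple (Suc b) (map (\<lambda>j. Seq ?D (proj b j)) [0..<b]))"
    by (rule ceq_tuple_cong) (auto intro: ceq.trans[OF ceq_proj_Suc ceq_Par_discard_left])
  also have "ceq \<dots> (Seq ?D (tuple b (map (proj b) [0..<b])))"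
    by (rule ceq.sym)
      (use ceq_Seq_tuple[of ?D "Suc b" b "map (proj b) [0..<b]"] in
        \<open>auto simp: o_def hom_list_def hom_def\<close>)
  also have "ceq \<dots> (Seq ?D (Id b))"
    by (rule ceq_Seq_right[OF assms]) auto
  also have "ceq \<dots> ?D"
    by (rule ceq_id_right) auto
  finally show ?thesis .
qed

lemma ceq_tuple_projs: "ceq (tuple b (map (proj b) [0..<b])) (Id b)"
proof (induction b)
  case (Suc b)
  have projs: "map (proj (Suc b)) [0..<Suc b] = proj (Suc b) 0 # map (\<lambda>j. proj (Suc b) (Suc j)) [0..<b]"
    by (simp add: upt_conv_Cons map_Suc_upt[symmetric] del: upt_Suc)
  have "ceq (tuple (Suc b) (map (proj (Suc b)) [0..<Suc b]))
      (Seq (copyn (Suc b)) (Par (Par (Id 1) (discardn b)) (Par (Gen Discard) (Id b))))"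
    unfolding projs tuple.simps
    by (rule ceq_Seq_right, rule ceq.cong_par[OF ceq_proj_0 ceq_tuple_projs_Suc[OF Suc]]) auto
  also have "ceq \<dots> (Seq (Par (Seq (Gen Copy) (Par (Id 1) (Gen Discard)))
      (Seq (copyn b) (Par (discardn b) (Id b)))) (Par (Par (Id 1) (Sw 0 0)) (Id b)))"
    by (rule ceq_copyn_Suc_Par) auto
  also have "ceq \<dots> (Seq (Par (Id 1) (Id b)) (Par (Par (Id 1) (Id 0)) (Id b)))"
    by (rule ceq.cong_seq, rule ceq.cong_par[OF ceq_copy_counit_right ceq_copyn_counit_left],
        rule ceq_Par_left, rule ceq_Par_right, rule ceq_Sw_0_left) auto
  also have "ceq \<dots> (Seq (Par (Id 1) (Id b)) (Par (Id 1) (Id b)))"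
    by (rule ceq_Seq_right, rule ceq_Par_left, rule ceq.par_unit_right) auto
  also have "ceq \<dots> (Id (Suc b))"
    using ceq_Seq_Par_Id[of 1 b] by simp
  finally show ?case .
qed (simp add: ceq.refl)

lemma ceq_copyn_proj2: "ceq (Seq (copyn 2) (Par (proj 2 0) (proj 2 1))) (Id 2)"
proof -
  have "ceq (Seq (copyn 2) (Par (proj 2 0) (proj 2 1))) (tuple 2 [proj 2 0, proj 2 1])"
    by (simp, rule ceq_Seq_right, rule ceq_Par_right, rule ceq.sym, rule ceq_copyn_discardn_right) auto
  also have "tuple 2 [proj 2 0, proj 2 1] = tuple 2 (map (proj 2) [0..<2])"
    by (simp add: upt_rec)
  also have "ceq \<dots> (Id 2)"
    by (rule ceq_tuple_projs)
  finally show ?thesis .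
qed

section \<open>Ring expressions and normal forms of circuits\<close>

datatype expr = Var nat | EZero | EOne | EAdd expr expr | EMult expr expr

fun vars_below :: "nat \<Rightarrow> expr \<Rightarrow> bool" where
  "vars_below a (Var i) = (i < a)"
| "vars_below a EZero = True"
| "vars_below a EOne = True"
| "vars_below a (EAdd e1 e2) = (vars_below a e1 \<and> vars_below a e2)"
| "vars_below a (EMult e1 e2) = (vars_below a e1 \<and> vars_below a e2)"

fun subst_expr :: "expr list \<Rightarrow> expr \<Rightarrow> expr" where
  "subst_expr es (Var i) = es ! i"
| "subst_expr es EZero = EZero"
| "subst_expr es EOne = EOne"
| "subst_expr es (EAdd e1 e2) = EAdd (subst_expr es e1) (subst_expr es e2)"
| "subst_expr es (EMult e1 e2) = EMult (subst_expr es e1) (subst_expr es e2)"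

fun poly_of_expr :: "expr \<Rightarrow> zpoly" where
  "poly_of_expr (Var i) = X i"
| "poly_of_expr EZero = 0"
| "poly_of_expr EOne = 1"
| "poly_of_expr (EAdd e1 e2) = poly_of_expr e1 + poly_of_expr e2"
| "poly_of_expr (EMult e1 e2) = poly_of_expr e1 * poly_of_expr e2"

text \<open>Variables \<open>i \<ge> a\<close> are junk, sent to zero.\<close>

fun expr_circ :: "nat \<Rightarrow> expr \<Rightarrow> circ" where
  "expr_circ a (Var i) = (if i < a then proj a i else Seq (discardn a) (Gen Zero))"
| "expr_circ a EZero = Seq (discardn a) (Gen Zero)"
| "expr_circ a EOne = Seq (discardn a) (Gen One)"
| "expr_circ a (EAdd e1 e2) = Seq (Seq (copyn a) (Par (expr_circ a e1) (expr_circ a e2))) (Gen Add)"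
| "expr_circ a (EMult e1 e2) = Seq (Seq (copyn a) (Par (expr_circ a e1) (expr_circ a e2))) (Gen And)"

lemma hom_expr_circ [simp]: "wf (expr_circ a e)" "cdom (expr_circ a e) = a" "ccod (expr_circ a e) = 1"
  by (induction e) auto

lemma subst_expr_Var: "vars_below a e \<Longrightarrow> subst_expr (map Var [0..<a]) e = e"
  by (induction e) auto

lemma vars_below_subst_expr:
  "vars_below b e \<Longrightarrow> length es = b \<Longrightarrow> \<forall>j<b. vars_below a (es ! j) \<Longrightarrow>
    vars_below a (subst_expr es e)"
  by (induction e) auto

lemma ceq_Seq_binop:
  assumes f: "wf f" "cdom f = a" "ccod f = b"
    and t: "wf t1" "cdom t1 = b" "wf t2" "cdom t2 = b" "ccod t1 + ccod t2 = gdom G"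
    and u: "ceq (Seq f t1) u1" "ceq (Seq f t2) u2"
  shows "ceq (Seq f (Seq (Seq (copyn b) (Par t1 t2)) (Gen G))) (Seq (Seq (copyn a) (Par u1 u2)) (Gen G))"
proof -
  have "ceq (Seq f (Seq (Seq (copyn b) (Par t1 t2)) (Gen G)))
      (Seq (Seq f (Seq (copyn b) (Par t1 t2))) (Gen G))"
    by (rule ceq_seq_assoc_sym) (use f t in auto)
  also have "ceq \<dots> (Seq (Seq (copyn a) (Par u1 u2)) (Gen G))"
    by (rule ceq_Seq_left, rule ceq.trans[OF ceq_Seq_copyn_Par ceq_Seq_right[OF ceq.cong_par[OF u]]])
      (use f t in auto)
  finally show ?thesis .
qed

lemma ceq_Seq_discardn_const:
  assumes "wf f" "cdom f = a" "ccod f = b" "gdom G = 0"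
  shows "ceq (Seq f (Seq (discardn b) (Gen G))) (Seq (discardn a) (Gen G))"
proof -
  have "ceq (Seq f (Seq (discardn b) (Gen G))) (Seq (Seq f (discardn b)) (Gen G))"
    by (rule ceq_seq_assoc_sym) (use assms in auto)
  also have "ceq \<dots> (Seq (discardn a) (Gen G))"
    by (rule ceq_Seq_left, rule ceq_discard_nat) (use assms in auto)
  finally show ?thesis .
qed

lemma ceq_Seq_expr_circ:
  assumes f: "wf f" "cdom f = a" "ccod f = b"
    and es: "length es = b" "\<And>j. j < b \<Longrightarrow> ceq (Seq f (proj b j)) (expr_circ a (es ! j))"
  shows "vars_below b d \<Longrightarrow> ceq (Seq f (expr_circ b d)) (expr_circ a (subst_expr es d))"
proof (induction d)
  case (Var j)
  then show ?case
    using es by simp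
next
  case EZero
  then show ?case
    using ceq_Seq_discardn_const[OF f] by simp
next
  case EOne
  then show ?case
    using ceq_Seq_discardn_const[OF f] by simp
next
  case (EAdd d1 d2)
  then show ?case
    by (simp, intro ceq_Seq_binop) (use f in auto)
next
  case (EMult d1 d2)
  then show ?case
    by (simp, intro ceq_Seq_binop) (use f in auto)
qed

lemma ceq_Par_expr_circ_discardn:
  assumes "vars_below a e"
  shows "ceq (Par (expr_circ a e) (discardn c)) (expr_circ (a + c) e)"
proof -
  have "ceq (Par (expr_circ a e) (discardn c)) (Seq (Par (Id a) (discardn c)) (expr_circ a e))"
    by (rule ceq_Par_discard_right) auto
  also have "ceq \<dots> (expr_circ (a + c) (subst_expr (map Var [0..<a]) e))"
  proof (rule ceq_Seq_expr_circ)
    fix j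
    assume j: "j < a"
    have "ceq (Seq (Par (Id a) (discardn c)) (proj a j)) (Par (proj a j) (discardn c))"
      by (rule ceq.sym, rule ceq_Par_discard_right) (use j in auto)
    also have "ceq \<dots> (proj (a + c) j)"
      by (rule ceq_Par_proj_discardn[OF j])
    finally show "ceq (Seq (Par (Id a) (discardn c)) (proj a j)) (expr_circ (a + c) (map Var [0..<a] ! j))"
      using j by simp
  qed (use assms in auto)
  finally show ?thesis
    using assms by (simp add: subst_expr_Var)
qed

lemma ceq_Par_discardn_expr_circ:
  assumes "vars_below c e"
  shows "ceq (Par (discardn a) (expr_circ c e))
    (expr_circ (a + c) (subst_expr (map (\<lambda>j. Var (a + j)) [0..<c]) e))"
proof -
  have "ceq (Par (discardn a) (expr_circ c e)) (Seq (Par (discardn a) (Id c)) (expr_circ c e))"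
    by (rule ceq_Par_discard_left) auto
  also have "ceq \<dots> (expr_circ (a + c) (subst_expr (map (\<lambda>j. Var (a + j)) [0..<c]) e))"
  proof (rule ceq_Seq_expr_circ)
    fix j
    assume j: "j < c"
    have "ceq (Seq (Par (discardn a) (Id c)) (proj c j)) (Par (discardn a) (proj c j))"
      by (rule ceq.sym, rule ceq_Par_discard_left) (use j in auto)
    also have "ceq \<dots> (proj (a + c) (a + j))"
      by (rule ceq_Par_discardn_proj[OF j])
    finally show "ceq (Seq (Par (discardn a) (Id c)) (proj c j))
        (expr_circ (a + c) (map (\<lambda>j. Var (a + j)) [0..<c] ! j))"
      using j by simp
  qed (use assms in auto)
  finally show ?thesis .
qed

lemma ceq_Seq_Par_proj_left:
  assumes "wf f" "wf g" "i < ccod f"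
  shows "ceq (Seq (Par f g) (proj (ccod f + ccod g) i)) (Par (Seq f (proj (ccod f) i)) (discardn (cdom g)))"
proof -
  have "ceq (Seq (Par f g) (proj (ccod f + ccod g) i)) (Seq (Par f g) (Par (proj (ccod f) i) (discardn (ccod g))))"
    by (rule ceq_Seq_right, rule ceq.sym, rule ceq_Par_proj_discardn) (use assms in auto)
  also have "ceq \<dots> (Par (Seq f (proj (ccod f) i)) (Seq g (discardn (ccod g))))"
    by (rule ceq_interchange_sym) (use assms in auto)
  also have "ceq \<dots> (Par (Seq f (proj (ccod f) i)) (discardn (cdom g)))"
    by (rule ceq_Par_right, rule ceq_discard_nat) (use assms in auto)
  finally show ?thesis .
qed

lemma ceq_Seq_Par_proj_right:
  assumes "wf f" "wf g" "k < ccod g"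
  shows "ceq (Seq (Par f g) (proj (ccod f + ccod g) (ccod f + k)))
    (Par (discardn (cdom f)) (Seq g (proj (ccod g) k)))"
proof -
  have "ceq (Seq (Par f g) (proj (ccod f + ccod g) (ccod f + k)))
      (Seq (Par f g) (Par (discardn (ccod f)) (proj (ccod g) k)))"
    by (rule ceq_Seq_right, rule ceq.sym, rule ceq_Par_discardn_proj) (use assms in auto)
  also have "ceq \<dots> (Par (Seq f (discardn (ccod f))) (Seq g (proj (ccod g) k)))"
    by (rule ceq_interchange_sym) (use assms in auto)
  also have "ceq \<dots> (Par (discardn (cdom f)) (Seq g (proj (ccod g) k)))"
    by (rule ceq_Par_left, rule ceq_discard_nat) (use assms in auto)
  finally show ?thesis .
qed

text \<open>\<open>Var j\<close> stands for input \<open>j\<close>; the clause for \<open>Gen Discard\<close>, which has no outputs,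
  is junk.\<close>

fun output_expr :: "circ \<Rightarrow> nat \<Rightarrow> expr" where
  "output_expr (Gen g) i = (case g of Copy \<Rightarrow> Var 0 | Zero \<Rightarrow> EZero | One \<Rightarrow> EOne
      | Add \<Rightarrow> EAdd (Var 0) (Var 1) | And \<Rightarrow> EMult (Var 0) (Var 1) | Discard \<Rightarrow> EZero)"
| "output_expr (Id n) i = Var i"
| "output_expr (Sw m n) i = (if i < n then Var (m + i) else Var (i - n))"
| "output_expr (Seq f g) i = subst_expr (map (output_expr f) [0..<ccod f]) (output_expr g i)"
| "output_expr (Par f g) i = (if i < ccod f then output_expr f i
      else subst_expr (map (\<lambda>j. Var (cdom f + j)) [0..<cdom g]) (output_expr g (i - ccod f)))"

lemma vars_below_mono: "vars_below a e \<Longrightarrow> a \<le> a' \<Longrightarrow> vars_below a' e"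
  by (induction e) auto

lemma vars_below_output_expr: "wf f \<Longrightarrow> i < ccod f \<Longrightarrow> vars_below (cdom f) (output_expr f i)"
proof (induction f arbitrary: i)
  case (Gen g) then show ?case by (cases g) auto
next
  case (Seq f g) then show ?case by (auto intro!: vars_below_subst_expr)
next
  case (Par f g)
  show ?case
  proof (cases "i < ccod f")
    case True then show ?thesis using Par by (auto intro: vars_below_mono[OF _ le_add1])
  qed (use Par in \<open>auto intro!: vars_below_subst_expr\<close>)
qed auto

lemma ceq_Seq_proj_1_0: "wf f \<Longrightarrow> ccod f = 1 \<Longrightarrow> ceq (Seq f (proj 1 0)) f"
  using ceq_Seq_right[OF ceq_proj_1_0, of f] ceq_id_right[of f 1] by (auto intro: ceq.trans)

lemma ceq_Copy_proj0: "ceq (Seq (Gen Copy) (proj 2 0)) (proj 1 0)"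
proof -
  have "ceq (proj 2 0) (Par (Id 1) (Gen Discard))"
    unfolding proj_def numeral_2_eq_2
    by (simp, rule ceq.trans[OF ceq.par_unit_left ceq_Par_right[OF ceq.par_unit_right]]) auto
  then have "ceq (Seq (Gen Copy) (proj 2 0)) (Seq (Gen Copy) (Par (Id 1) (Gen Discard)))"
    by (rule ceq_Seq_right) auto
  also have "ceq \<dots> (Id 1)"
    by (rule ceq_copy_counit_right)
  also have "ceq \<dots> (proj 1 0)"
    by (rule ceq.sym, rule ceq_proj_1_0)
  finally show ?thesis .
qed

lemma ceq_Copy_proj1: "ceq (Seq (Gen Copy) (proj 2 1)) (proj 1 0)"
proof -
  have "ceq (proj 2 1) (Par (Gen Discard) (Id 1))"
    unfolding proj_def numeral_2_eq_2
    by (simp, rule ceq.cong_par[OF ceq.par_unit_right ceq.par_unit_right]) auto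
  then have "ceq (Seq (Gen Copy) (proj 2 1)) (Seq (Gen Copy) (Par (Gen Discard) (Id 1)))"
    by (rule ceq_Seq_right) auto
  also have "ceq \<dots> (Id 1)"
    by (rule ceq.copy_unit)
  also have "ceq \<dots> (proj 1 0)"
    by (rule ceq.sym, rule ceq_proj_1_0)
  finally show ?thesis .
qed

lemma ceq_Gen_proj_output_expr:
  assumes "i < gcod g"
  shows "ceq (Seq (Gen g) (proj (gcod g) i)) (expr_circ (gdom g) (output_expr (Gen g) i))"
proof -
  have unary: "ceq (Seq (Gen g) (proj 1 0)) (Seq (Id (gdom g)) (Gen g))" if "gcod g = 1"
    using ceq.trans[OF ceq_Seq_proj_1_0 ceq.sym[OF ceq_id_left]] that by simp
  have binop: "ceq (Seq (Gen g) (proj 1 0)) (Seq (Seq (copyn 2) (Par (proj 2 0) (proj 2 1))) (Gen g))"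
    if "gdom g = 2" "gcod g = 1"
  proof -
    have "ceq (Seq (Gen g) (proj 1 0)) (Seq (Id 2) (Gen g))"
      using unary that by simp
    also have "ceq \<dots> (Seq (Seq (copyn 2) (Par (proj 2 0) (proj 2 1))) (Gen g))"
      by (rule ceq_Seq_left, rule ceq.sym, rule ceq_copyn_proj2) (use that in auto)
    finally show ?thesis .
  qed
  show ?thesis
    using assms ceq_Copy_proj0 ceq_Copy_proj1 unary binop
    by (cases g) (auto simp: numeral_2_eq_2 less_Suc_eq)
qed

lemma ceq_Sw_proj:
  assumes "i < n + m"
  shows "ceq (Seq (Sw m n) (proj (n + m) i)) (expr_circ (m + n) (output_expr (Sw m n) i))"
proof (cases "i < n")
  case True
  have "ceq (Seq (Sw m n) (proj (n + m) i)) (Seq (Sw m n) (Par (proj n i) (discardn m)))"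
    by (rule ceq_Seq_right, rule ceq.sym, rule ceq_Par_proj_discardn) (use True in auto)
  also have "ceq \<dots> (Seq (Par (discardn m) (proj n i)) (Sw 0 1))"
    by (rule ceq.sym, rule ceq_sw_nat) (use True in auto)
  also have "ceq \<dots> (Seq (Par (discardn m) (proj n i)) (Id 1))"
    by (rule ceq_Seq_right, rule ceq_Sw_0_left) (use True in auto)
  also have "ceq \<dots> (Par (discardn m) (proj n i))"
    by (rule ceq_id_right) auto
  also have "ceq \<dots> (proj (m + n) (m + i))"
    by (rule ceq_Par_discardn_proj) (use True in auto)
  finally show ?thesis using True by simp
next
  case False
  define k where "k = i - n"
  have k: "i = n + k" "k < m" using False assms by (auto simp: k_def)
  have "ceq (Seq (Sw m n) (proj (n + m) i)) (Seq (Sw m n) (Par (discardn n) (proj m k)))"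
    by (rule ceq_Seq_right, rule ceq.sym) (use ceq_Par_discardn_proj[OF k(2), of n] k in auto)
  also have "ceq \<dots> (Seq (Par (proj m k) (discardn n)) (Sw 1 0))"
    by (rule ceq.sym, rule ceq_sw_nat) (use k in auto)
  also have "ceq \<dots> (Seq (Par (proj m k) (discardn n)) (Id 1))"
    by (rule ceq_Seq_right, rule ceq_Sw_0_right) (use k in auto)
  also have "ceq \<dots> (Par (proj m k) (discardn n))"
    by (rule ceq_id_right) auto
  also have "ceq \<dots> (proj (m + n) k)"
    by (rule ceq_Par_proj_discardn) (use k in auto)
  finally show ?thesis using k by simp
qed

lemma ceq_Seq_Par_proj_output_expr:
  assumes "wf f" "wf g" "i < ccod f + ccod g"
    and "\<And>i. i < ccod f \<Longrightarrow> ceq (Seq f (proj (ccod f) i)) (expr_circ (cdom f) (output_expr f i))"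
    and "\<And>i. i < ccod g \<Longrightarrow> ceq (Seq g (proj (ccod g) i)) (expr_circ (cdom g) (output_expr g i))"
  shows "ceq (Seq (Par f g) (proj (ccod f + ccod g) i)) (expr_circ (cdom f + cdom g) (output_expr (Par f g) i))"
proof (cases "i < ccod f")
  case True
  with assms have "ceq (Seq (Par f g) (proj (ccod f + ccod g) i))
      (Par (expr_circ (cdom f) (output_expr f i)) (discardn (cdom g)))"
    by (intro ceq.trans[OF ceq_Seq_Par_proj_left ceq_Par_left]) auto
  also have "ceq \<dots> (expr_circ (cdom f + cdom g) (output_expr f i))"
    by (rule ceq_Par_expr_circ_discardn) (use assms True vars_below_output_expr in auto)
  finally show ?thesis
    using True by simp
next
  case False
  then obtain k where k: "i = ccod f + k" "k < ccod g"
    using assms(3) by (metis add_diff_inverse_nat nat_add_left_cancel_less)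
  with assms have "ceq (Seq (Par f g) (proj (ccod f + ccod g) (ccod f + k)))
      (Par (discardn (cdom f)) (expr_circ (cdom g) (output_expr g k)))"
    by (intro ceq.trans[OF ceq_Seq_Par_proj_right ceq_Par_right]) auto
  also have "ceq \<dots> (expr_circ (cdom f + cdom g)
      (subst_expr (map (\<lambda>j. Var (cdom f + j)) [0..<cdom g]) (output_expr g k)))"
    by (rule ceq_Par_discardn_expr_circ) (use assms k vars_below_output_expr in auto)
  finally show ?thesis
    using k by simp
qed

lemma ceq_Seq_proj_output_expr:
  "wf f \<Longrightarrow> i < ccod f \<Longrightarrow> ceq (Seq f (proj (ccod f) i)) (expr_circ (cdom f) (output_expr f i))"
proof (induction f arbitrary: i)
  case (Gen g)
  then show ?case
    using ceq_Gen_proj_output_expr by simp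
next
  case (Id n)
  then show ?case
    using ceq_id_left[of "proj n i" n] by simp
next
  case (Sw m n)
  then show ?case
    using ceq_Sw_proj by simp
next
  case (Seq f g)
  then have "ceq (Seq (Seq f g) (proj (ccod g) i)) (Seq f (Seq g (proj (ccod g) i)))"
    by (intro ceq.seq_assoc) auto
  also have "ceq \<dots> (Seq f (expr_circ (ccod f) (output_expr g i)))"
    by (rule ceq_Seq_right) (use Seq in auto)
  also have "ceq \<dots> (expr_circ (cdom f) (output_expr (Seq f g) i))"
    by (simp, rule ceq_Seq_expr_circ) (use Seq vars_below_output_expr[of g i] in auto)
  finally show ?case
    by simp
next
  case (Par f g)
  then show ?case
    using ceq_Seq_Par_proj_output_expr[of f g i] by simp
qed

section \<open>Completeness\<close>

inductive expr_eq :: "expr \<Rightarrow> expr \<Rightarrow> bool" where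
  e_refl: "expr_eq x x"
| e_sym: "expr_eq x y \<Longrightarrow> expr_eq y x"
| e_trans: "expr_eq x y \<Longrightarrow> expr_eq y z \<Longrightarrow> expr_eq x z"
| e_add_cong: "expr_eq x x' \<Longrightarrow> expr_eq y y' \<Longrightarrow> expr_eq (EAdd x y) (EAdd x' y')"
| e_mult_cong: "expr_eq x x' \<Longrightarrow> expr_eq y y' \<Longrightarrow> expr_eq (EMult x y) (EMult x' y')"
| e_add_assoc: "expr_eq (EAdd (EAdd x y) z) (EAdd x (EAdd y z))"
| e_add_comm: "expr_eq (EAdd x y) (EAdd y x)"
| e_add_zero: "expr_eq (EAdd EZero x) x"
| e_mult_assoc: "expr_eq (EMult (EMult x y) z) (EMult x (EMult y z))"
| e_mult_comm: "expr_eq (EMult x y) (EMult y x)"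
| e_mult_one: "expr_eq (EMult EOne x) x"
| e_distrib: "expr_eq (EMult x (EAdd y z)) (EAdd (EMult x y) (EMult x z))"
| e_add_self: "expr_eq (EAdd x x) EZero"

lemma expr_eq_imp_poly_eq: "expr_eq x y \<Longrightarrow> poly_of_expr x = poly_of_expr y"
  by (induction rule: expr_eq.induct) (auto simp: algebra_simps)

lemma equivp_expr_eq: "equivp expr_eq"
  by (rule equivpI) (auto simp: reflp_def symp_def transp_def intro: e_refl e_sym e_trans)

quotient_type expr_quot = expr / expr_eq
  by (rule equivp_expr_eq)

instantiation expr_quot :: ring_char2
begin

lift_definition zero_expr_quot :: expr_quot is EZero .
lift_definition one_expr_quot :: expr_quot is EOne .
lift_definition plus_expr_quot :: "expr_quot \<Rightarrow> expr_quot \<Rightarrow> expr_quot" is EAdd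
  by (rule e_add_cong)
lift_definition times_expr_quot :: "expr_quot \<Rightarrow> expr_quot \<Rightarrow> expr_quot" is EMult
  by (rule e_mult_cong)
lift_definition uminus_expr_quot :: "expr_quot \<Rightarrow> expr_quot" is "\<lambda>x. x" .
lift_definition minus_expr_quot :: "expr_quot \<Rightarrow> expr_quot \<Rightarrow> expr_quot" is EAdd
  by (rule e_add_cong)

instance
proof
  fix a b c :: expr_quot
  show "a + b + c = a + (b + c)" by transfer (rule e_add_assoc)
  show "a + b = b + a" by transfer (rule e_add_comm)
  show "0 + a = a" by transfer (rule e_add_zero)
  show "a * b * c = a * (b * c)" by transfer (rule e_mult_assoc)
  show "a * b = b * a" by transfer (rule e_mult_comm)
  show "1 * a = a" by transfer (rule e_mult_one)
  show "(a + b) * c = a * c + b * c"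
    by transfer (meson e_trans e_mult_comm e_distrib e_add_cong)
  show "- a + a = 0" by transfer (rule e_add_self)
  show "(1::expr_quot) + 1 = 0" by transfer (rule e_add_self)
  show "a - b = a + - b" by transfer (rule e_refl)
  show "(0::expr_quot) \<noteq> 1"
  proof transfer
    show "\<not> expr_eq EZero EOne" using expr_eq_imp_poly_eq[of EZero EOne] by auto
  qed
qed

end

text \<open>\<open>expr_quot\<close> is the free commutative ring of characteristic 2 on the variables;
  evaluation at its generators inverts \<open>poly_of_expr\<close>.\<close>

lemma eval_poly_abs_expr_quot:
  "eval_poly (\<lambda>i. abs_expr_quot (Var i)) (poly_of_expr e) = abs_expr_quot e"
  by (induction e)
    (simp_all add: zero_expr_quot_def one_expr_quot_def plus_expr_quot.abs_eq times_expr_quot.abs_eq)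

lemma poly_eq_imp_expr_eq: "poly_of_expr x = poly_of_expr y \<Longrightarrow> expr_eq x y"
  by (metis eval_poly_abs_expr_quot expr_quot.abs_eq_iff)

lemma ceq_expr_circ_output_expr:
  assumes "wf f" "ccod f = 1"
  shows "ceq f (expr_circ (cdom f) (output_expr f 0))"
proof -
  have "ceq f (Seq f (proj 1 0))"
    by (rule ceq.sym, rule ceq_Seq_proj_1_0) (use assms in auto)
  also have "ceq \<dots> (expr_circ (cdom f) (output_expr f 0))"
    using ceq_Seq_proj_output_expr[of f 0] assms by simp
  finally show ?thesis .
qed

lemma ceq_expr_circ_subst_expr:
  assumes "length es = k" "vars_below k e" "ceq (expr_circ k e) f"
  shows "ceq (expr_circ a (subst_expr es e)) (Seq (tuple a (map (expr_circ a) es)) f)"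
proof -
  let ?T = "tuple a (map (expr_circ a) es)"
  have T: "hom_list (map (expr_circ a) es) a"
    by (auto simp: hom_list_def hom_def)
  have "ceq (Seq ?T (expr_circ k e)) (expr_circ a (subst_expr es e))"
  proof (rule ceq_Seq_expr_circ)
    fix j
    assume "j < k"
    then show "ceq (Seq ?T (proj k j)) (expr_circ a (es ! j))"
      using ceq_tuple_proj[OF T, of j] assms by simp
  qed (use T assms in auto)
  then have "ceq (expr_circ a (subst_expr es e)) (Seq ?T (expr_circ k e))"
    by (rule ceq.sym)
  also have "ceq \<dots> (Seq ?T f)"
    by (rule ceq_Seq_right[OF assms(3)]) (use T assms in auto)
  finally show ?thesis .
qed

text \<open>An equation between one-output circuits yields an equation between the expressions
  they compute; precomposing with a tuple of expression circuits gives all its instances.\<close>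

lemma ceq_expr_circ_axiom:
  assumes "ceq f g" "cdom f = k" "ccod f = 1" "length es = k"
  shows "ceq (expr_circ a (subst_expr es (output_expr f 0)))
    (expr_circ a (subst_expr es (output_expr g 0)))"
proof -
  have fg: "wf f" "wf g" "cdom g = k" "ccod g = 1"
    using ceq_typed[OF assms(1)] assms by auto
  have pattern: "vars_below k (output_expr h 0)" "ceq (expr_circ k (output_expr h 0)) h"
    if "h \<in> {f, g}" for h
    using that fg assms vars_below_output_expr[of h 0] ceq.sym[OF ceq_expr_circ_output_expr[of h]]
    by auto
  have "ceq (expr_circ a (subst_expr es (output_expr f 0))) (Seq (tuple a (map (expr_circ a) es)) f)"
    by (rule ceq_expr_circ_subst_expr) (use pattern assms in auto)
  also have "ceq \<dots> (Seq (tuple a (map (expr_circ a) es)) g)"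
    by (rule ceq_Seq_right[OF assms(1)]) (use fg assms in \<open>auto simp: hom_list_def hom_def\<close>)
  also have "ceq \<dots> (expr_circ a (subst_expr es (output_expr g 0)))"
    by (rule ceq.sym, rule ceq_expr_circ_subst_expr) (use pattern assms in auto)
  finally show ?thesis .
qed

lemma expr_eq_imp_ceq: "expr_eq x y \<Longrightarrow> ceq (expr_circ a x) (expr_circ a y)"
proof (induction rule: expr_eq.induct)
  case (e_refl x)
  show ?case by (rule ceq.refl) simp
next
  case (e_sym x y)
  show ?case using e_sym.IH by (rule ceq.sym)
next
  case (e_trans x y z)
  show ?case using e_trans.IH by (rule ceq.trans)
next
  case (e_add_cong x x' y y')
  then show ?case by (simp, intro ceq_Seq_left ceq_Seq_right ceq.cong_par) auto
next
  case (e_mult_cong x x' y y')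
  then show ?case by (simp, intro ceq_Seq_left ceq_Seq_right ceq.cong_par) auto
next
  case (e_add_assoc x y z)
  show ?case using ceq_expr_circ_axiom[OF ceq.add_assoc, of 3 "[x, y, z]" a] by (simp add: upt_rec)
next
  case (e_add_comm x y)
  show ?case using ceq_expr_circ_axiom[OF ceq.add_comm, of 2 "[y, x]" a] by (simp add: upt_rec)
next
  case (e_add_zero x)
  show ?case using ceq_expr_circ_axiom[OF ceq.add_unit, of 1 "[x]" a] by (simp add: upt_rec)
next
  case (e_mult_assoc x y z)
  show ?case using ceq_expr_circ_axiom[OF ceq.and_assoc, of 3 "[x, y, z]" a] by (simp add: upt_rec)
next
  case (e_mult_comm x y)
  show ?case using ceq_expr_circ_axiom[OF ceq.and_comm, of 2 "[y, x]" a] by (simp add: upt_rec)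
next
  case (e_mult_one x)
  show ?case using ceq_expr_circ_axiom[OF ceq.and_unit, of 1 "[x]" a] by (simp add: upt_rec)
next
  case (e_distrib x y z)
  show ?case using ceq_expr_circ_axiom[OF ceq.distrib, of 3 "[x, y, z]" a] by (simp add: upt_rec)
next
  case (e_add_self x)
  show ?case using ceq_expr_circ_axiom[OF ceq.char2, of 1 "[x]" a] by (simp add: upt_rec)
qed

lemma interp_proj: "j < b \<Longrightarrow> interp (proj b j) = [X j]"
  by (simp add: proj_def interp_Par)

lemma interp_expr_circ: "vars_below a e \<Longrightarrow> interp (expr_circ a e) = [poly_of_expr e]"
proof (induction e)
  case (EAdd e1 e2)
  then have "interp (Seq (copyn a) (Par (expr_circ a e1) (expr_circ a e2)))
      = [poly_of_expr e1, poly_of_expr e2]"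
    by (simp add: interp_copy_Par)
  then show ?case
    by (simp add: interp_Seq[of "Seq (copyn a) _"])
next
  case (EMult e1 e2)
  then have "interp (Seq (copyn a) (Par (expr_circ a e1) (expr_circ a e2)))
      = [poly_of_expr e1, poly_of_expr e2]"
    by (simp add: interp_copy_Par)
  then show ?case
    by (simp add: interp_Seq[of "Seq (copyn a) _"])
qed (simp_all add: interp_proj interp_Seq)

lemma interp_tuple_expr_circ:
  "\<forall>e\<in>set es. vars_below a e \<Longrightarrow> interp (tuple a (map (expr_circ a) es)) = map poly_of_expr es"
proof (induction es)
  case (Cons e es)
  have "hom_list (map (expr_circ a) es) a"
    by (auto simp: hom_list_def hom_def)
  with Cons show ?case
    by (simp add: interp_copy_Par interp_expr_circ)
qed simp

lemma poly_of_output_expr: "wf f \<Longrightarrow> j < ccod f \<Longrightarrow> poly_of_expr (output_expr f j) = interp f ! j"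
  using ceq_imp_interp_eq[OF ceq_Seq_proj_output_expr, of f j]
    interp_expr_circ[OF vars_below_output_expr, of f j]
  by (simp add: interp_Seq interp_proj)

lemma ceq_normal_form:
  assumes "wf f" "cdom f = a" "ccod f = b"
  shows "ceq f (tuple a (map (\<lambda>j. expr_circ a (output_expr f j)) [0..<b]))"
proof -
  have "ceq f (Seq f (tuple b (map (proj b) [0..<b])))"
    using ceq_Seq_right[OF ceq_tuple_projs, of f] ceq_id_right[of f b] assms
    by (auto intro: ceq.trans ceq.sym)
  also have "ceq \<dots> (tuple a (map (\<lambda>j. Seq f (proj b j)) [0..<b]))"
    using ceq_Seq_tuple[of f a b "map (proj b) [0..<b]"] assms
    by (simp add: hom_list_def hom_def o_def)
  also have "ceq \<dots> (tuple a (map (\<lambda>j. expr_circ a (output_expr f j)) [0..<b]))"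
    by (rule ceq_tuple_cong) (use assms ceq_Seq_proj_output_expr[of f] in auto)
  finally show ?thesis .
qed

lemma ex_expr_poly: "vars_in {..<a} p \<Longrightarrow> \<exists>e. vars_below a e \<and> poly_of_expr e = p"
proof (induction rule: zpoly_induct)
  case zero
  show ?case
    by (rule exI[of _ EZero]) simp
next
  case one
  show ?case
    by (rule exI[of _ EOne]) simp
next
  case (var i)
  then show ?case
    by (intro exI[of _ "Var i"]) simp
next
  case (add p q)
  then obtain e1 e2 where "vars_below a e1" "poly_of_expr e1 = p" "vars_below a e2" "poly_of_expr e2 = q"
    by blast
  then show ?case
    by (intro exI[of _ "EAdd e1 e2"]) simp
next
  case (mult p q)
  then obtain e1 e2 where "vars_below a e1" "poly_of_expr e1 = p" "vars_below a e2" "poly_of_expr e2 = q"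
    by blast
  then show ?case
    by (intro exI[of _ "EMult e1 e2"]) simp
qed

lemma ex_exprs_polys:
  "\<forall>p\<in>set ps. vars_in {..<a} p \<Longrightarrow> \<exists>es. (\<forall>e\<in>set es. vars_below a e) \<and> map poly_of_expr es = ps"
proof (induction ps)
  case (Cons p ps)
  then obtain es where "\<forall>e\<in>set es. vars_below a e" "map poly_of_expr es = ps"
    by auto
  moreover obtain e where "vars_below a e" "poly_of_expr e = p"
    using ex_expr_poly Cons.prems by auto
  ultimately show ?case
    by (intro exI[of _ "e # es"]) auto
qed simp

theorem interp_eq_imp_ceq:
  assumes f: "wf f" "cdom f = a" "ccod f = b" and g: "wf g" "cdom g = a" "ccod g = b"
    and eq: "interp f = interp g"
  shows "ceq f g"
proof -
  have "ceq f (tuple a (map (\<lambda>j. expr_circ a (output_expr f j)) [0..<b]))"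
    by (rule ceq_normal_form[OF f])
  also have "ceq \<dots> (tuple a (map (\<lambda>j. expr_circ a (output_expr g j)) [0..<b]))"
  proof (rule ceq_tuple_cong)
    fix j
    assume "j \<in> set [0..<b]"
    then have "poly_of_expr (output_expr f j) = poly_of_expr (output_expr g j)"
      using poly_of_output_expr f g eq by simp
    then show "ceq (expr_circ a (output_expr f j)) (expr_circ a (output_expr g j))"
      by (intro expr_eq_imp_ceq poly_eq_imp_expr_eq)
  qed simp
  also have "ceq \<dots> g"
    by (rule ceq.sym, rule ceq_normal_form[OF g])
  finally show ?thesis .
qed

theorem interp_full:
  assumes "\<forall>p\<in>set ps. vars_in {..<a} p"
  shows "\<exists>f. hom f a (length ps) \<and> interp f = ps"
proof -
  obtain es where es: "\<forall>e\<in>set es. vars_below a e" "map poly_of_expr es = ps"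
    using ex_exprs_polys[OF assms] by blast
  have "hom_list (map (expr_circ a) es) a"
    by (auto simp: hom_list_def hom_def)
  with es show ?thesis
    by (intro exI[of _ "tuple a (map (expr_circ a) es)"])
      (auto simp: hom_def interp_tuple_expr_circ)
qed

theorem proposition2:
  shows "(\<forall>f. wf f \<longrightarrow> length (interp f) = ccod f \<and> (\<forall>p\<in>set (interp f). vars_in {..<cdom f} p))
   \<and> (\<forall>a b f g. hom f a b \<longrightarrow> hom g a b \<longrightarrow> (ceq f g \<longleftrightarrow> interp f = interp g))
   \<and> (\<forall>a ps. (\<forall>p\<in>set ps. vars_in {..<a} p) \<longrightarrow> (\<exists>f. hom f a (length ps) \<and> interp f = ps))"
proof (intro conjI allI impI)
  fix f
  assume "wf f"
  then show "length (interp f) = ccod f" "\<forall>p\<in>set (interp f). vars_in {..<cdom f} p"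
    using interp_well_typed by auto
next
  fix a b f g
  assume "hom f a b" "hom g a b"
  then show "ceq f g \<longleftrightarrow> interp f = interp g"
    using ceq_imp_interp_eq interp_eq_imp_ceq[of f a b g] by (auto simp: hom_def)
next
  fix a ps
  assume "\<forall>p\<in>set ps. vars_in {..<a} p"
  then show "\<exists>f. hom f a (length ps) \<and> interp f = ps"
    by (rule interp_full)
qed

end
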